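(* For every $p\ge1$ and every $v\in L^p(\mathcal{D})$, $$\inf_{v_h\in\mathbb{V}_h}\|v-v_h\|_{L^p(\mathcal{D})}\to0\quad\text{as }h\to0.$$
   Context: Let $d=2$, $\mathcal{D}=(-L,L)^2$, $L>0$. For $m\in\mathbb{N}$ let $J=2^m$, $h=2L/J$, $\mathbf{x}_i=-L+ih$ ($i=0,\dots,J$). One-dimensional functions on $[-L,L]$ ($\chi_I$ = indicator of $I$): $\phi_1=\frac32\chi_{[\mathbf{x}_0,\mathbf{x}_1]}-\frac12\chi_{(\mathbf{x}_1,\mathbf{x}_2]}$; $\phi_i=-\frac12\chi_{(\mathbf{x}_{i-2},\mathbf{x}_{i-1}]}+\chi_{(\mathbf{x}_{i-1},\mathbf{x}_i]}-\frac12\chi_{(\mathbf{x}_i,\mathbf{x}_{i+1}]}$ for $i=2,\dots,J-1$; $\phi_J=-\frac12\chi_{(\mathbf{x}_{J-2},\mathbf{x}_{J-1}]}+\frac32\chi_{(\mathbf{x}_{J-1},\mathbf{x}_J]}$; $\psi_i$ solves $-\psi_i''=\phi_i$ on $(-L,L)$, $\psi_i(\pm L)=0$. Two-dimensional basis functions: $\boldsymbol\phi_{(i_1,i_2)}(x)=\frac{3}{2h^2}\big(\phi_{i_1}(x_1)\psi_{i_2}(x_2)+\psi_{i_1}(x_1)\phi_{i_2}(x_2)\big)$ for $i_1,i_2\in\{1,\dots,J\}$, and $\mathbb{V}_h=\mathrm{span}\{\boldsymbol\phi_{(i_1,i_2)}\}\subset L^p(\mathcal{D})$. *)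

theory Defs
  imports "HOL-Analysis.Analysis"
begin

definition meshJ :: "nat \<Rightarrow> nat" where "meshJ m = 2 ^ m"

definition meshh :: "real \<Rightarrow> nat \<Rightarrow> real" where
  "meshh L m = 2 * L / real (meshJ m)"

definition node :: "real \<Rightarrow> nat \<Rightarrow> nat \<Rightarrow> real" where
  "node L m i = - L + real i * meshh L m"

definition phi1 :: "real \<Rightarrow> nat \<Rightarrow> nat \<Rightarrow> real \<Rightarrow> real" where
  "phi1 L m i x =
    (let J = meshJ m; xg = node L m in
     if i = 1 then 3/2 * indicator {xg 0 .. xg 1} x - 1/2 * indicator {xg 1 <.. xg 2} x
     else if 2 \<le> i \<and> i \<le> J - 1 then
        - 1/2 * indicator {xg (i-2) <.. xg (i-1)} x + indicator {xg (i-1) <.. xg i} x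
        - 1/2 * indicator {xg i <.. xg (i+1)} x
     else if i = J then
        - 1/2 * indicator {xg (J-2) <.. xg (J-1)} x + 3/2 * indicator {xg (J-1) <.. xg J} x
     else 0)"

text \<open>psi_i: the solution of -psi'' = phi_i on (-L,L), psi(-L) = psi(L) = 0.
  Since phi_i is piecewise constant, "solution" is understood as: psi is C^1 on [-L,L]
  with psi'(x) = psi'(-L) - integral of phi_i over [-L,x]; psi is set to 0 outside [-L,L].\<close>
definition psi1 :: "real \<Rightarrow> nat \<Rightarrow> nat \<Rightarrow> real \<Rightarrow> real" where
  "psi1 L m i = (THE \<psi>. (\<forall>x. x \<notin> {-L..L} \<longrightarrow> \<psi> x = 0) \<and> \<psi> (-L) = 0 \<and> \<psi> L = 0 \<and>
     (\<exists>c. \<forall>x\<in>{-L..L}.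
        (\<psi> has_real_derivative (c - integral {-L..x} (phi1 L m i))) (at x within {-L..L})))"

definition bphi :: "real \<Rightarrow> nat \<Rightarrow> nat \<Rightarrow> nat \<Rightarrow> real \<times> real \<Rightarrow> real" where
  "bphi L m i1 i2 x = 3 / (2 * (meshh L m)\<^sup>2) *
     (phi1 L m i1 (fst x) * psi1 L m i2 (snd x) + psi1 L m i1 (fst x) * phi1 L m i2 (snd x))"

definition Vh :: "real \<Rightarrow> nat \<Rightarrow> (real \<times> real \<Rightarrow> real) set" where
  "Vh L m = {(\<lambda>x. \<Sum>i1\<in>{1..meshJ m}. \<Sum>i2\<in>{1..meshJ m}. c i1 i2 * bphi L m i1 i2 x) | c. True}"

definition dom2 :: "real \<Rightarrow> (real \<times> real) set" where
  "dom2 L = {-L<..<L} \<times> {-L<..<L}"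

definition in_Lp :: "real \<Rightarrow> (real \<times> real) set \<Rightarrow> (real \<times> real \<Rightarrow> real) \<Rightarrow> bool" where
  "in_Lp p D v \<longleftrightarrow> set_borel_measurable lebesgue D v \<and>
                    set_integrable lebesgue D (\<lambda>x. \<bar>v x\<bar> powr p)"

definition Lp_norm :: "real \<Rightarrow> (real \<times> real) set \<Rightarrow> (real \<times> real \<Rightarrow> real) \<Rightarrow> real" where
  "Lp_norm p D v = (LINT x : D | lebesgue. \<bar>v x\<bar> powr p) powr (1 / p)"

end

theory Submission
  imports Defs
begin

text \<open>Since \<open>\<psi>\<^sub>i\<close> solves \<open>-\<psi>'' = \<phi>\<^sub>i\<close> with zero boundary values, \<open>V\<^sub>h\<close> contains
  \<open>a(x\<^sub>1) (T b)(x\<^sub>2) + (T a)(x\<^sub>1) b(x\<^sub>2)\<close> for all \<open>a, b\<close> in the span of the \<open>\<phi>\<^sub>i\<close>, where \<open>T\<close> is the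
  Dirichlet solution operator. The sine modes \<open>s\<^sub>k(t) = sin (k \<pi> (t + L) / 2L)\<close> satisfy
  \<open>T s\<^sub>k = s\<^sub>k / \<omega>\<^sub>k\<^sup>2\<close>, so \<open>s\<^sub>k(x\<^sub>1) s\<^sub>l(x\<^sub>2)\<close> is a multiple of \<open>s\<^sub>k \<otimes> T s\<^sub>l + T s\<^sub>k \<otimes> s\<^sub>l\<close>. Each \<open>s\<^sub>k\<close>
  has an \<open>O(h)\<close>-close interpolant in the span of the \<open>\<phi>\<^sub>i\<close>, and \<open>T\<close> is bounded in the sup norm,
  so products of sine modes are uniform limits of elements of \<open>V\<^sub>h\<close>. Their span contains
  \<open>sin \<theta>\<^sub>1 sin \<theta>\<^sub>2 P(cos \<theta>\<^sub>1, cos \<theta>\<^sub>2)\<close> for every polynomial \<open>P\<close>, which by Stone--Weierstrass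
  approximates every continuous function supported in a smaller square uniformly; such functions
  are dense in \<open>L\<^sup>p\<close>.\<close>

section \<open>The Dirichlet problem \<open>-\<psi>'' = u\<close> on \<open>(-L, L)\<close>\<close>

definition double_primitive :: "real \<Rightarrow> (real \<Rightarrow> real) \<Rightarrow> real \<Rightarrow> real" where
  "double_primitive L u y = integral {-L..y} (\<lambda>s. integral {-L..s} u)"

definition dirichlet_solve :: "real \<Rightarrow> (real \<Rightarrow> real) \<Rightarrow> real \<Rightarrow> real" where
  "dirichlet_solve L u x =
     (if x \<in> {-L..L} then (x + L) / (2 * L) * double_primitive L u L - double_primitive L u x else 0)"

lemma has_real_derivative_double_primitive:
  assumes "u integrable_on {-L..L}" and "x \<in> {-L..L}"
  shows "(double_primitive L u has_real_derivative integral {-L..x} u) (at x within {-L..L})"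
  unfolding double_primitive_def[abs_def] has_real_derivative_iff_has_vector_derivative
  by (rule integral_has_vector_derivative[OF indefinite_integral_continuous_1[OF assms(1)] assms(2)])

lemma has_real_derivative_dirichlet_solve:
  assumes "u integrable_on {-L..L}" and x: "x \<in> {-L..L}"
  shows "(dirichlet_solve L u has_real_derivative
           double_primitive L u L / (2 * L) - integral {-L..x} u) (at x within {-L..L})"
proof -
  define c where "c = double_primitive L u L / (2 * L)"
  have "((\<lambda>y. (y + L) * c - double_primitive L u y)
          has_real_derivative c - integral {-L..x} u) (at x within {-L..L})"
    by (auto intro!: derivative_eq_intros has_real_derivative_double_primitive[OF assms])
  then have "((\<lambda>y. (y + L) * c - double_primitive L u y)
          has_real_derivative double_primitive L u L / (2 * L) - integral {-L..x} u) (at x within {-L..L})"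
    by (simp add: c_def)
  then show ?thesis
    by (rule has_field_derivative_transform_within[where d = 1]) (use x in \<open>auto simp: dirichlet_solve_def c_def\<close>)
qed

lemma dirichlet_solution_unique:
  assumes L: "L > 0" and u: "u integrable_on {-L..L}"
    and outside: "\<And>x. x \<notin> {-L..L} \<Longrightarrow> \<psi> x = 0" and left: "\<psi> (-L) = 0" and right: "\<psi> L = 0"
    and deriv: "\<And>x. x \<in> {-L..L} \<Longrightarrow>
                  (\<psi> has_real_derivative (c - integral {-L..x} u)) (at x within {-L..L})"
  shows "\<psi> = dirichlet_solve L u"
proof -
  define d where "d y = \<psi> y - (c * (y + L) - double_primitive L u y)" for y
  have "\<exists>k. \<forall>y\<in>{-L..L}. d y = k"
  proof (rule has_field_derivative_zero_constant)
    fix y assume y: "y \<in> {-L..L}"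
    have "(d has_real_derivative (c - integral {-L..y} u) - (c - integral {-L..y} u)) (at y within {-L..L})"
      unfolding d_def[abs_def]
      by (auto intro!: derivative_eq_intros deriv y has_real_derivative_double_primitive[OF u y])
    then show "(d has_real_derivative 0) (at y within {-L..L})" by simp
  qed simp
  moreover have "d (-L) = 0" using left by (simp add: d_def double_primitive_def)
  ultimately have d0: "d y = 0" if "y \<in> {-L..L}" for y
    using L that by force
  have "c = double_primitive L u L / (2 * L)"
    using d0[of L] right L by (simp add: d_def field_simps)
  then show "\<psi> = dirichlet_solve L u"
    using d0 outside by (auto simp: fun_eq_iff d_def dirichlet_solve_def field_simps)
qed

lemma the_dirichlet_solution:
  assumes L: "L > 0" and u: "u integrable_on {-L..L}"
  shows "(THE \<psi>. (\<forall>x. x \<notin> {-L..L} \<longrightarrow> \<psi> x = 0) \<and> \<psi> (-L) = 0 \<and> \<psi> L = 0 \<and>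
           (\<exists>c. \<forall>x\<in>{-L..L}. (\<psi> has_real_derivative (c - integral {-L..x} u)) (at x within {-L..L})))
         = dirichlet_solve L u"
proof (rule the_equality)
  show "(\<forall>x. x \<notin> {-L..L} \<longrightarrow> dirichlet_solve L u x = 0) \<and> dirichlet_solve L u (-L) = 0 \<and>
      dirichlet_solve L u L = 0 \<and> (\<exists>c. \<forall>x\<in>{-L..L}.
        (dirichlet_solve L u has_real_derivative (c - integral {-L..x} u)) (at x within {-L..L}))"
    using L has_real_derivative_dirichlet_solve[OF u]
    by (auto simp: dirichlet_solve_def double_primitive_def intro!: exI[of _ "double_primitive L u L / (2 * L)"])
next
  fix \<psi> assume "(\<forall>x. x \<notin> {-L..L} \<longrightarrow> \<psi> x = 0) \<and> \<psi> (-L) = 0 \<and> \<psi> L = 0 \<and>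
     (\<exists>c. \<forall>x\<in>{-L..L}. (\<psi> has_real_derivative (c - integral {-L..x} u)) (at x within {-L..L}))"
  then show "\<psi> = dirichlet_solve L u"
    using dirichlet_solution_unique[OF L u] by blast
qed

lemma double_primitive_lincomb:
  assumes u: "u integrable_on {-L..L}" and w: "w integrable_on {-L..L}" and y: "y \<in> {-L..L}"
  shows "double_primitive L (\<lambda>t. a * u t + b * w t) y
           = a * double_primitive L u y + b * double_primitive L w y"
proof -
  have prim: "integral {-L..s} (\<lambda>t. a * u t + b * w t) = a * integral {-L..s} u + b * integral {-L..s} w"
    if "s \<in> {-L..y}" for s
  proof -
    have "u integrable_on {-L..s}" "w integrable_on {-L..s}"
      using that y by (auto intro: integrable_on_subinterval[OF u] integrable_on_subinterval[OF w])
    then show ?thesis by (simp add: integral_add integrable_on_mult_right)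
  qed
  have int: "(\<lambda>s. integral {-L..s} f) integrable_on {-L..y}" if "f integrable_on {-L..L}"
    for f :: "real \<Rightarrow> real"
    using y by (intro integrable_on_subinterval[OF integrable_continuous_interval[OF
          indefinite_integral_continuous_1[OF that]]]) auto
  have "double_primitive L (\<lambda>t. a * u t + b * w t) y
          = integral {-L..y} (\<lambda>s. a * integral {-L..s} u + b * integral {-L..s} w)"
    unfolding double_primitive_def by (rule integral_cong) (use prim in auto)
  also have "\<dots> = a * double_primitive L u y + b * double_primitive L w y"
    using int[OF u] int[OF w] by (simp add: double_primitive_def integral_add integrable_on_mult_right)
  finally show ?thesis .
qed

lemma dirichlet_solve_lincomb:
  assumes "u integrable_on {-L..L}" and "w integrable_on {-L..L}"
  shows "dirichlet_solve L (\<lambda>t. a * u t + b * w t) x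
           = a * dirichlet_solve L u x + b * dirichlet_solve L w x"
proof (cases "x \<in> {-L..L}")
  case True
  then have "L \<in> {-L..L}" by simp
  with True show ?thesis
    unfolding dirichlet_solve_def if_P[OF True]
    by (simp add: double_primitive_lincomb[OF assms] algebra_simps)
next
  case False
  then show ?thesis unfolding dirichlet_solve_def if_not_P[OF False] by simp
qed

lemma dirichlet_solve_diff:
  assumes "u integrable_on {-L..L}" and "w integrable_on {-L..L}"
  shows "dirichlet_solve L (\<lambda>t. u t - w t) x = dirichlet_solve L u x - dirichlet_solve L w x"
  using dirichlet_solve_lincomb[OF assms, of 1 "-1"] by simp

lemma dirichlet_solve_sum:
  assumes "finite I" and "\<And>i. i \<in> I \<Longrightarrow> f i integrable_on {-L..L}"
  shows "dirichlet_solve L (\<lambda>t. \<Sum>i\<in>I. a i * f i t) x = (\<Sum>i\<in>I. a i * dirichlet_solve L (f i) x)"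
  using assms
proof (induction I rule: finite_induct)
  case empty
  then show ?case by (simp add: dirichlet_solve_def double_primitive_def)
next
  case (insert i I)
  have "(\<lambda>t. \<Sum>i\<in>I. a i * f i t) integrable_on {-L..L}"
    using insert by (intro integrable_sum integrable_on_mult_right) auto
  then have "dirichlet_solve L (\<lambda>t. a i * f i t + 1 * (\<Sum>i\<in>I. a i * f i t)) x
               = a i * dirichlet_solve L (f i) x + 1 * dirichlet_solve L (\<lambda>t. \<Sum>i\<in>I. a i * f i t) x"
    using insert.prems by (intro dirichlet_solve_lincomb) auto
  then show ?case using insert by simp
qed

lemma abs_dirichlet_solve_le:
  assumes L: "L > 0" and u: "u integrable_on {-L..L}" and bound: "\<And>t. t \<in> {-L<..L} \<Longrightarrow> \<bar>u t\<bar> \<le> d"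
  shows "\<bar>dirichlet_solve L u x\<bar> \<le> 8 * L\<^sup>2 * d"
proof -
  have d: "0 \<le> d" using bound[of L] L by force
  have prim: "\<bar>integral {-L..s} u\<bar> \<le> 2 * L * d" if s: "s \<in> {-L..L}" for s
  proof -
    have "\<bar>integral {-L..s} u\<bar> \<le> d * (s - -L)"
      using has_integral_bound_real[of d "{-L}" u "integral {-L..s} u" "-L" s] d s bound
        integrable_integral[OF integrable_on_subinterval[OF u, of "-L" s]] by auto
    also have "\<dots> \<le> d * (2 * L)" using s d by (intro mult_left_mono) auto
    finally show ?thesis by (simp add: mult_ac)
  qed
  have double: "\<bar>double_primitive L u y\<bar> \<le> 4 * L\<^sup>2 * d" if y: "y \<in> {-L..L}" for y
  proof -
    have "(\<lambda>s. integral {-L..s} u) integrable_on {-L..y}"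
      using y by (intro integrable_on_subinterval[OF integrable_continuous_interval[OF
          indefinite_integral_continuous_1[OF u]]]) auto
    then have "\<bar>double_primitive L u y\<bar> \<le> (2 * L * d) * (y - -L)"
      unfolding double_primitive_def
      using has_integral_bound_real[of "2 * L * d" "{}"] L d y prim by (force intro: integrable_integral)
    also have "\<dots> \<le> (2 * L * d) * (2 * L)" using y L d by (intro mult_left_mono) auto
    finally show ?thesis by (simp add: power2_eq_square mult_ac)
  qed
  show ?thesis
  proof (cases "x \<in> {-L..L}")
    case True
    have frac: "\<bar>(x + L) / (2 * L)\<bar> \<le> 1" using True L by (auto simp: abs_le_iff field_simps)
    have "\<bar>dirichlet_solve L u x\<bar> \<le> \<bar>(x + L) / (2 * L) * double_primitive L u L\<bar> + \<bar>double_primitive L u x\<bar>"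
      unfolding dirichlet_solve_def if_P[OF True] by (rule abs_triangle_ineq4)
    also have "\<dots> \<le> 1 * (4 * L\<^sup>2 * d) + 4 * L\<^sup>2 * d"
      unfolding abs_mult using L True by (intro add_mono mult_mono frac double) auto
    finally show ?thesis by (simp add: mult_ac)
  qed (use L d in \<open>auto simp: dirichlet_solve_def\<close>)
qed

definition freq :: "real \<Rightarrow> nat \<Rightarrow> real" where
  "freq L k = real k * pi / (2 * L)"

definition sine_mode :: "real \<Rightarrow> nat \<Rightarrow> real \<Rightarrow> real" where
  "sine_mode L k x = sin (freq L k * (x + L))"

lemma freq_pos: "L > 0 \<Longrightarrow> 1 \<le> k \<Longrightarrow> freq L k > 0"
  by (simp add: freq_def)

lemma continuous_on_sine_mode: "continuous_on S (sine_mode L k)"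
  unfolding sine_mode_def by (intro continuous_intros)

lemma sine_mode_integrable: "sine_mode L k integrable_on {a..b}"
  by (rule integrable_continuous_interval[OF continuous_on_sine_mode])

lemma dirichlet_solve_sine_mode:
  assumes L: "L > 0" and k: "1 \<le> k" and x: "x \<in> {-L..L}"
  shows "dirichlet_solve L (sine_mode L k) x = sine_mode L k x / (freq L k)\<^sup>2"
proof -
  define w where "w = freq L k"
  have w: "w > 0" using freq_pos[OF L k] by (simp add: w_def)
  have prim: "integral {-L..s} (sine_mode L k) = (1 - cos (w * (s + L))) / w" if s: "s \<in> {-L..L}" for s
  proof -
    have "(sine_mode L k has_integral (- cos (w * (s + L)) / w) - (- cos (w * (-L + L)) / w)) {-L..s}"
    proof (rule fundamental_theorem_of_calculus)
      fix t assume "t \<in> {-L..s}"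
      have "((\<lambda>t. - cos (w * (t + L)) / w) has_real_derivative sin (w * (t + L)) * w / w) (at t within {-L..s})"
        by (auto intro!: derivative_eq_intros)
      then show "((\<lambda>t. - cos (w * (t + L)) / w) has_vector_derivative sine_mode L k t) (at t within {-L..s})"
        using w by (simp add: sine_mode_def w_def has_real_derivative_iff_has_vector_derivative)
    qed (use s in simp)
    then show ?thesis by (simp add: integral_unique diff_divide_distrib)
  qed
  have double: "double_primitive L (sine_mode L k) y = (y + L) / w - sin (w * (y + L)) / w\<^sup>2"
    if y: "y \<in> {-L..L}" for y
  proof -
    have "((\<lambda>s. integral {-L..s} (sine_mode L k)) has_integral
            ((y + L) / w - sin (w * (y + L)) / w\<^sup>2) - ((-L + L) / w - sin (w * (-L + L)) / w\<^sup>2)) {-L..y}"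
    proof (rule fundamental_theorem_of_calculus)
      fix t assume t: "t \<in> {-L..y}"
      have "((\<lambda>t. (t + L) / w - sin (w * (t + L)) / w\<^sup>2) has_real_derivative
              1 / w - cos (w * (t + L)) * w / w\<^sup>2) (at t within {-L..y})"
        using w by (auto intro!: derivative_eq_intros simp: field_simps power2_eq_square)
      then show "((\<lambda>t. (t + L) / w - sin (w * (t + L)) / w\<^sup>2) has_vector_derivative
                   integral {-L..t} (sine_mode L k)) (at t within {-L..y})"
        using w t y by (simp add: prim has_real_derivative_iff_has_vector_derivative
                                  power2_eq_square diff_divide_distrib)
    qed (use y in simp)
    then show ?thesis by (simp add: double_primitive_def integral_unique)
  qed
  have "w * (L + L) = real k * pi" using L by (simp add: w_def freq_def field_simps)
  then have "double_primitive L (sine_mode L k) L = 2 * L / w"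
    using double[of L] L by simp
  then show ?thesis
    using x w L by (simp add: dirichlet_solve_def double sine_mode_def w_def[symmetric] field_simps power2_eq_square)
qed

section \<open>Piecewise constant functions on the mesh\<close>

lemma meshh_pos: "L > 0 \<Longrightarrow> meshh L m > 0"
  by (simp add: meshh_def meshJ_def)

lemma meshh_times_meshJ: "meshh L m * real (meshJ m) = 2 * L"
  by (simp add: meshh_def meshJ_def)

lemma node_less_iff: "L > 0 \<Longrightarrow> node L m a < node L m b \<longleftrightarrow> a < b"
  using meshh_pos[of L m] by (simp add: node_def)

lemma node_le_iff: "L > 0 \<Longrightarrow> node L m a \<le> node L m b \<longleftrightarrow> a \<le> b"
  using meshh_pos[of L m] by (simp add: node_def)

lemma eventually_meshh_le:
  assumes L: "L > 0" and \<eta>: "\<eta> > 0"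
  shows "\<forall>\<^sub>F m in sequentially. meshh L m \<le> \<eta>"
proof -
  obtain n where n: "2 * L / \<eta> < 2 ^ n" using real_arch_pow[of 2 "2 * L / \<eta>"] by auto
  show ?thesis
    unfolding eventually_sequentially
  proof (intro exI allI impI)
    fix m assume "n \<le> m"
    then have "(2::real) ^ n \<le> 2 ^ m" by (intro power_increasing) auto
    with n have "2 * L / \<eta> < 2 ^ m" by linarith
    with \<eta> show "meshh L m \<le> \<eta>" by (simp add: meshh_def meshJ_def field_simps)
  qed
qed

lemma eventually_two_le_meshJ: "\<forall>\<^sub>F m in sequentially. 2 \<le> meshJ m"
  unfolding eventually_sequentially meshJ_def
proof (intro exI allI impI)
  fix m :: nat assume "1 \<le> m"
  then have "(2::nat) ^ 1 \<le> 2 ^ m" by (rule power_increasing) simp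
  then show "2 \<le> (2::nat) ^ m" by simp
qed

lemma obtain_cell:
  assumes L: "L > 0" and x: "x \<in> {-L<..L}"
  obtains j where "1 \<le> j" "j \<le> meshJ m" "node L m (j - 1) < x" "x \<le> node L m j"
proof -
  define h where "h = meshh L m"
  have h: "h > 0" using meshh_pos[OF L] by (simp add: h_def)
  define t where "t = (x + L) / h"
  have t: "0 < t" "t \<le> real (meshJ m)"
    using x h meshh_times_meshJ[of L m] by (auto simp: t_def h_def field_simps)
  define j where "j = nat \<lceil>t\<rceil>"
  have "1 \<le> \<lceil>t\<rceil>" using t by simp
  then have j: "1 \<le> j" "j \<le> meshJ m" using t by (auto simp: j_def le_nat_iff nat_le_iff ceiling_le_iff)
  have "real j - 1 < t" "t \<le> real j" using t ceiling_correct[of t] by (auto simp: j_def)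
  with j h have "node L m (j - 1) < x" "x \<le> node L m j"
    by (auto simp: node_def h_def[symmetric] t_def of_nat_diff field_simps)
  with j that show ?thesis by blast
qed

lemma phi1_integrable: "phi1 L m i integrable_on {a..b}"
proof -
  have indicator_integrable: "indicat_real S integrable_on {a..b}" if "S \<in> sets lborel" "bounded S" for S
    using that by (simp add: integrable_on_indicator fmeasurable_Int_fmeasurable Int_commute
        bounded_set_imp_lmeasurable)
  show ?thesis
    unfolding phi1_def Let_def
    by (cases "i = 1"; cases "2 \<le> i \<and> i \<le> meshJ m - 1"; cases "i = meshJ m")
       (auto intro!: integrable_diff integrable_add integrable_on_mult_right indicator_integrable)
qed

lemma psi1_eq_dirichlet_solve: "L > 0 \<Longrightarrow> psi1 L m i = dirichlet_solve L (phi1 L m i)"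
  unfolding psi1_def by (rule the_dirichlet_solution) (auto intro: phi1_integrable)

context
  fixes L :: real and m j :: nat and x :: real
  assumes L: "L > 0" and j: "1 \<le> j" and left: "node L m (j - 1) < x" and right: "x \<le> node L m j"
begin

lemma node_less_iff_cell: "node L m a < x \<longleftrightarrow> a < j"
proof
  assume "node L m a < x"
  then have "node L m a < node L m j" using right by simp
  then show "a < j" using node_less_iff[OF L] by blast
next
  assume "a < j"
  then have "node L m a \<le> node L m (j - 1)" using node_le_iff[OF L] by simp
  then show "node L m a < x" using left by simp
qed

lemma le_node_iff_cell: "x \<le> node L m b \<longleftrightarrow> j \<le> b"
proof
  assume "x \<le> node L m b"
  then have "node L m (j - 1) < node L m b" using left by simp
  then show "j \<le> b" using node_less_iff[OF L] j by auto
next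
  assume "j \<le> b"
  then have "node L m j \<le> node L m b" using node_le_iff[OF L] by simp
  then show "x \<le> node L m b" using right by simp
qed

lemma indicator_cell: "indicat_real {node L m a<..node L m (Suc a)} x = (if j = Suc a then 1 else 0)"
  by (auto simp: indicator_def node_less_iff_cell le_node_iff_cell)

lemma indicator_first_cell: "indicat_real {node L m 0..node L m 1} x = (if j = 1 then 1 else 0)"
  using j node_less_iff_cell[of 0] by (auto simp: indicator_def le_node_iff_cell)

lemma phi1_on_cell:
  assumes J: "2 \<le> meshJ m" and jJ: "j \<le> meshJ m" and i: "1 \<le> i" "i \<le> meshJ m"
  shows "phi1 L m i x = (if i = j then 1 else 0) - 1/2 * (if i = j + 1 then 1 else 0)
           - 1/2 * (if i + 1 = j then 1 else 0) + (if i = j \<and> (j = 1 \<or> j = meshJ m) then 1/2 else 0)"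
proof -
  consider "i = 1" | "2 \<le> i" "i \<le> meshJ m - 1" | "i = meshJ m" "i \<noteq> 1" using i J by linarith
  then show ?thesis
  proof cases
    case 1
    have e: "phi1 L m i x = 3/2 * (if j = 1 then 1 else 0) - 1/2 * (if j = 2 then 1 else 0)"
      using 1 indicator_first_cell indicator_cell[of 1] unfolding phi1_def Let_def
      by (simp add: numeral_2_eq_2)
    consider "j = 1" | "j = 2" | "j > 2" using j by linarith
    then show ?thesis by cases (use e 1 J in auto)
  next
    case 2
    have "i - 1 = Suc (i - 2)" "i = Suc (i - 1)" using 2 by auto
    then have e: "phi1 L m i x = - 1/2 * (if j = i - 1 then 1 else 0) + (if j = i then 1 else 0)
                 - 1/2 * (if j = i + 1 then 1 else 0)"
      using 2 indicator_cell[of "i - 2"] indicator_cell[of "i - 1"] indicator_cell[of i]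
      unfolding phi1_def Let_def by (simp del: Suc_diff_Suc)
    consider "j + 1 < i" | "j + 1 = i" | "j = i" | "j = i + 1" | "j > i + 1" by linarith
    then show ?thesis by cases (use e 2 in auto)
  next
    case 3
    have "meshJ m - 1 = Suc (meshJ m - 2)" "meshJ m = Suc (meshJ m - 1)" using J by auto
    then have e: "phi1 L m i x = - 1/2 * (if j = i - 1 then 1 else 0) + 3/2 * (if j = i then 1 else 0)"
      using 3 indicator_cell[of "meshJ m - 2"] indicator_cell[of "meshJ m - 1"]
      unfolding phi1_def Let_def by (simp del: Suc_diff_Suc)
    consider "j + 1 < i" | "j + 1 = i" | "j = i" using 3 jJ by linarith
    then show ?thesis by cases (use e 3 J in auto)
  qed
qed

text \<open>The boundary functions \<open>\<phi>\<^sub>1\<close> and \<open>\<phi>\<^sub>J\<close> act like interior ones once the coefficients are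
  extended by the reflected ghost values \<open>c\<^sub>0 = -c\<^sub>1\<close> and \<open>c\<^sub>J\<^sub>+\<^sub>1 = -c\<^sub>J\<close>.\<close>
lemma sum_phi1_on_cell:
  assumes J: "2 \<le> meshJ m" and jJ: "j \<le> meshJ m"
    and ghost_left: "g 0 = - g 1" and ghost_right: "g (meshJ m + 1) = - g (meshJ m)"
  shows "(\<Sum>i\<in>{1..meshJ m}. g i * phi1 L m i x) = g j - (g (j + 1) + g (j - 1)) / 2"
proof -
  define J where "J = meshJ m"
  have delta: "(\<Sum>i\<in>{1..J}. g i * (if i = a then 1 else 0)) = (if a \<in> {1..J} then g a else 0)" for a
    by (simp add: if_distrib[of "times _"] sum.delta cong: if_cong)
  have "(\<Sum>i\<in>{1..J}. g i * phi1 L m i x) = (\<Sum>i\<in>{1..J}.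
      (1 + (if j = 1 \<or> j = J then 1/2 else 0)) * (g i * (if i = j then 1 else 0))
      - 1/2 * (g i * (if i = j + 1 then 1 else 0)) - 1/2 * (g i * (if i = j - 1 then 1 else 0)))"
  proof (rule sum.cong[OF refl])
    fix i assume i: "i \<in> {1..J}"
    have "phi1 L m i x = (1 + (if j = 1 \<or> j = J then 1/2 else 0)) * (if i = j then 1 else 0)
        - 1/2 * (if i = j + 1 then 1 else 0) - 1/2 * (if i = j - 1 then 1 else 0)"
      using i j by (cases "i = j") (auto simp: phi1_on_cell[OF J jJ] J_def)
    then show "g i * phi1 L m i x = (1 + (if j = 1 \<or> j = J then 1/2 else 0)) * (g i * (if i = j then 1 else 0))
      - 1/2 * (g i * (if i = j + 1 then 1 else 0)) - 1/2 * (g i * (if i = j - 1 then 1 else 0))"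
      by (simp only: right_diff_distrib mult.left_commute[of "g i"])
  qed
  also have "\<dots> = (1 + (if j = 1 \<or> j = J then 1/2 else 0)) * (if j \<in> {1..J} then g j else 0)
      - 1/2 * (if j + 1 \<in> {1..J} then g (j + 1) else 0) - 1/2 * (if j - 1 \<in> {1..J} then g (j - 1) else 0)"
    by (simp only: sum_subtractf sum_distrib_left[symmetric] delta)
  also have "\<dots> = g j - (g (j + 1) + g (j - 1)) / 2"
  proof -
    consider "j = 1" | "j = J" | "2 \<le> j" "j + 1 \<le> J" using j jJ J by (force simp: J_def)
    then show ?thesis
      by cases (use j J ghost_left ghost_right in \<open>auto simp: J_def field_simps\<close>)
  qed
  finally show ?thesis by (simp add: J_def)
qed

end

lemma abs_sin_diff_le: "\<bar>sin a - sin b\<bar> \<le> \<bar>a - b :: real\<bar>"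
proof -
  have "\<bar>sin a - sin b\<bar> = 2 * \<bar>sin ((a - b) / 2)\<bar> * \<bar>cos ((a + b) / 2)\<bar>"
    by (simp add: sin_diff_sin abs_mult)
  also have "\<dots> \<le> 2 * \<bar>(a - b) / 2\<bar> * 1"
    by (intro mult_mono abs_sin_x_le_abs_x abs_cos_le_one) auto
  finally show ?thesis by simp
qed

text \<open>The samples \<open>c\<^sub>i\<close> of a sine mode at the cell midpoints \<open>(i - 1/2) h\<close> satisfy \<open>c\<^sub>0 = -c\<^sub>1\<close>,
  \<open>c\<^sub>J\<^sub>+\<^sub>1 = -c\<^sub>J\<close> and \<open>c\<^sub>j - (c\<^sub>j\<^sub>+\<^sub>1 + c\<^sub>j\<^sub>-\<^sub>1) / 2 = (1 - cos (\<omega> h)) c\<^sub>j\<close>, so after division by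
  \<open>1 - cos (\<omega> h)\<close> they give an interpolant equal to the sine mode at the midpoint of each cell.\<close>
definition sine_interp :: "real \<Rightarrow> nat \<Rightarrow> nat \<Rightarrow> real \<Rightarrow> real" where
  "sine_interp L m k x = (\<Sum>i\<in>{1..meshJ m}.
     sine_mode L k (node L m i - meshh L m / 2) / (1 - cos (freq L k * meshh L m)) * phi1 L m i x)"

lemma sine_interp_on_cell:
  assumes L: "L > 0" and k: "1 \<le> k" and J: "2 \<le> meshJ m" and small: "freq L k * meshh L m < pi"
    and j: "1 \<le> j" "j \<le> meshJ m" and x: "node L m (j - 1) < x" "x \<le> node L m j"
  shows "sine_interp L m k x = sine_mode L k (node L m j - meshh L m / 2)"
proof -
  define h where "h = meshh L m"
  define w where "w = freq L k"
  define g where "g i = sin (w * ((real i - 1/2) * h))" for i :: nat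
  have mid: "sine_mode L k (node L m i - h / 2) = g i" for i
    by (simp add: sine_mode_def node_def g_def h_def w_def algebra_simps)
  have "0 < w * h" using freq_pos[OF L k] meshh_pos[OF L] by (simp add: w_def h_def)
  then have "cos (w * h) < cos 0" using small by (intro cos_monotone_0_pi) (auto simp: w_def h_def)
  then have cos_lt: "cos (w * h) < 1" by simp
  have "w * ((0 - 1/2) * h) = - (w * ((1 - 1/2) * h))" by simp
  then have ghost_left: "g 0 = - g 1" unfolding g_def by (metis of_nat_0 of_nat_1 sin_minus)
  have "w * (real (meshJ m) * h) = real k * pi"
    using meshh_times_meshJ[of L m] L by (simp add: w_def h_def freq_def field_simps)
  then have "w * ((real (meshJ m + 1) - 1/2) * h) = real k * pi + w * h / 2"
    "w * ((real (meshJ m) - 1/2) * h) = real k * pi - w * h / 2"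
    by (simp_all add: algebra_simps)
  then have ghost_right: "g (meshJ m + 1) = - g (meshJ m)"
    unfolding g_def by (simp add: sin_add sin_diff)
  have "w * ((real (j + 1) - 1/2) * h) = w * ((real j - 1/2) * h) + w * h"
    "w * ((real (j - 1) - 1/2) * h) = w * ((real j - 1/2) * h) - w * h"
    using j by (simp_all add: of_nat_diff algebra_simps)
  then have recurrence: "g (j + 1) + g (j - 1) = 2 * cos (w * h) * g j"
    unfolding g_def by (simp add: sin_add sin_diff)
  have "sine_interp L m k x = (\<Sum>i\<in>{1..meshJ m}. g i / (1 - cos (w * h)) * phi1 L m i x)"
    by (simp add: sine_interp_def mid flip: h_def w_def)
  also have "\<dots> = g j / (1 - cos (w * h)) - (g (j + 1) / (1 - cos (w * h)) + g (j - 1) / (1 - cos (w * h))) / 2"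
    by (rule sum_phi1_on_cell[OF L j(1) x J j(2)]) (use ghost_left ghost_right in auto)
  also have "\<dots> = (g j - (g (j + 1) + g (j - 1)) / 2) / (1 - cos (w * h))"
    by (simp add: diff_divide_distrib add_divide_distrib mult.commute)
  also have "\<dots> = g j"
    unfolding recurrence using cos_lt by (simp add: field_simps)
  finally show ?thesis by (simp add: mid flip: h_def)
qed

lemma abs_sine_interp_diff_le:
  assumes L: "L > 0" and k: "1 \<le> k" and J: "2 \<le> meshJ m" and small: "freq L k * meshh L m < pi"
    and x: "x \<in> {-L<..L}"
  shows "\<bar>sine_interp L m k x - sine_mode L k x\<bar> \<le> freq L k * meshh L m / 2"
proof -
  obtain j where j: "1 \<le> j" "j \<le> meshJ m" and cell: "node L m (j - 1) < x" "x \<le> node L m j"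
    using obtain_cell[OF L x] .
  have "node L m (j - 1) = node L m j - meshh L m"
    using j by (simp add: node_def of_nat_diff algebra_simps)
  then have mid: "\<bar>(node L m j - meshh L m / 2) - x\<bar> \<le> meshh L m / 2"
    using cell unfolding abs_le_iff by linarith
  have "\<bar>sine_interp L m k x - sine_mode L k x\<bar>
      \<le> \<bar>freq L k * ((node L m j - meshh L m / 2) + L) - freq L k * (x + L)\<bar>"
    unfolding sine_interp_on_cell[OF L k J small j cell] sine_mode_def by (rule abs_sin_diff_le)
  also have "\<dots> = freq L k * \<bar>(node L m j - meshh L m / 2) - x\<bar>"
    using freq_pos[OF L k] by (simp add: abs_mult flip: right_diff_distrib)
  also have "\<dots> \<le> freq L k * (meshh L m / 2)"
    using freq_pos[OF L k] mid by (intro mult_left_mono) auto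
  finally show ?thesis by simp
qed

section \<open>Uniform approximation by \<open>V\<^sub>h\<close>\<close>

definition Uh :: "real \<Rightarrow> nat \<Rightarrow> (real \<Rightarrow> real) set" where
  "Uh L m = {(\<lambda>x. \<Sum>i\<in>{1..meshJ m}. c i * phi1 L m i x) | c. True}"

lemma Uh_integrable: "a \<in> Uh L m \<Longrightarrow> a integrable_on {s..t}"
  unfolding Uh_def by (auto intro!: integrable_sum integrable_on_mult_right phi1_integrable)

lemma sine_interp_in_Uh: "sine_interp L m k \<in> Uh L m"
  unfolding Uh_def sine_interp_def
  by (rule CollectI, rule exI[of _ "\<lambda>i. sine_mode L k (node L m i - meshh L m / 2)
                                          / (1 - cos (freq L k * meshh L m))"]) simp

lemma dirichlet_solve_Uh:
  assumes "L > 0"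
  shows "dirichlet_solve L (\<lambda>x. \<Sum>i\<in>{1..meshJ m}. c i * phi1 L m i x) t
           = (\<Sum>i\<in>{1..meshJ m}. c i * psi1 L m i t)"
  using assms by (simp add: dirichlet_solve_sum phi1_integrable psi1_eq_dirichlet_solve)

lemma Vh_zero: "(\<lambda>x. 0) \<in> Vh L m"
  unfolding Vh_def by (rule CollectI, rule exI[of _ "\<lambda>i j. 0"]) simp

lemma Vh_add:
  assumes "f \<in> Vh L m" and "g \<in> Vh L m"
  shows "(\<lambda>x. f x + g x) \<in> Vh L m"
proof -
  obtain c d where "f = (\<lambda>x. \<Sum>i\<in>{1..meshJ m}. \<Sum>j\<in>{1..meshJ m}. c i j * bphi L m i j x)"
    and "g = (\<lambda>x. \<Sum>i\<in>{1..meshJ m}. \<Sum>j\<in>{1..meshJ m}. d i j * bphi L m i j x)"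
    using assms unfolding Vh_def by blast
  then show ?thesis
    unfolding Vh_def
    by (intro CollectI exI[of _ "\<lambda>i j. c i j + d i j"]) (simp add: sum.distrib distrib_right)
qed

lemma Vh_scale:
  assumes "f \<in> Vh L m"
  shows "(\<lambda>x. a * f x) \<in> Vh L m"
proof -
  obtain c where "f = (\<lambda>x. \<Sum>i\<in>{1..meshJ m}. \<Sum>j\<in>{1..meshJ m}. c i j * bphi L m i j x)"
    using assms unfolding Vh_def by blast
  then show ?thesis
    unfolding Vh_def by (intro CollectI exI[of _ "\<lambda>i j. a * c i j"]) (simp add: sum_distrib_left mult.assoc)
qed

lemma symmetric_tensor_in_Vh:
  assumes L: "L > 0" and a: "a \<in> Uh L m" and b: "b \<in> Uh L m"
  shows "(\<lambda>x. a (fst x) * dirichlet_solve L b (snd x) + dirichlet_solve L a (fst x) * b (snd x)) \<in> Vh L m"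
proof -
  obtain \<alpha> \<beta> where a_eq: "a = (\<lambda>x. \<Sum>i\<in>{1..meshJ m}. \<alpha> i * phi1 L m i x)"
    and b_eq: "b = (\<lambda>x. \<Sum>i\<in>{1..meshJ m}. \<beta> i * phi1 L m i x)"
    using a b unfolding Uh_def by blast
  have h: "meshh L m \<noteq> 0" using meshh_pos[OF L, of m] by simp
  define c where "c i j = \<alpha> i * \<beta> j * (2 * (meshh L m)\<^sup>2 / 3)" for i j
  have "c i j * bphi L m i j x = (\<alpha> i * phi1 L m i (fst x)) * (\<beta> j * psi1 L m j (snd x))
          + (\<alpha> i * psi1 L m i (fst x)) * (\<beta> j * phi1 L m j (snd x))" for i j x
    using h by (simp add: c_def bphi_def power2_eq_square field_simps)
  then have "(\<lambda>x. \<Sum>i\<in>{1..meshJ m}. \<Sum>j\<in>{1..meshJ m}. c i j * bphi L m i j x)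
      = (\<lambda>x. a (fst x) * dirichlet_solve L b (snd x) + dirichlet_solve L a (fst x) * b (snd x))"
    unfolding a_eq b_eq dirichlet_solve_Uh[OF L] by (simp add: sum.distrib sum_product)
  moreover have "(\<lambda>x. \<Sum>i\<in>{1..meshJ m}. \<Sum>j\<in>{1..meshJ m}. c i j * bphi L m i j x) \<in> Vh L m"
    unfolding Vh_def by blast
  ultimately show ?thesis by simp
qed

definition Vh_approximable :: "real \<Rightarrow> (real \<times> real \<Rightarrow> real) \<Rightarrow> bool" where
  "Vh_approximable L g \<longleftrightarrow>
     (\<forall>e>0. \<forall>\<^sub>F m in sequentially. \<exists>vh\<in>Vh L m. \<forall>x\<in>dom2 L. \<bar>g x - vh x\<bar> \<le> e)"

lemma Vh_approximableD:
  "Vh_approximable L g \<Longrightarrow> e > 0 \<Longrightarrow>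
     \<forall>\<^sub>F m in sequentially. \<exists>vh\<in>Vh L m. \<forall>x\<in>dom2 L. \<bar>g x - vh x\<bar> \<le> e"
  by (simp add: Vh_approximable_def)

lemma Vh_approximable_zero: "Vh_approximable L (\<lambda>x. 0)"
  unfolding Vh_approximable_def by (auto intro!: always_eventually bexI[OF _ Vh_zero])

lemma Vh_approximable_add:
  assumes f: "Vh_approximable L f" and g: "Vh_approximable L g"
  shows "Vh_approximable L (\<lambda>x. f x + g x)"
  unfolding Vh_approximable_def
proof (intro allI impI)
  fix e :: real assume "e > 0"
  then have "\<forall>\<^sub>F m in sequentially. (\<exists>v\<in>Vh L m. \<forall>x\<in>dom2 L. \<bar>f x - v x\<bar> \<le> e / 2)
                                   \<and> (\<exists>w\<in>Vh L m. \<forall>x\<in>dom2 L. \<bar>g x - w x\<bar> \<le> e / 2)"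
    by (intro eventually_conj Vh_approximableD[OF f] Vh_approximableD[OF g]) simp_all
  then show "\<forall>\<^sub>F m in sequentially. \<exists>vh\<in>Vh L m. \<forall>x\<in>dom2 L. \<bar>f x + g x - vh x\<bar> \<le> e"
  proof (rule eventually_mono)
    fix m assume "(\<exists>v\<in>Vh L m. \<forall>x\<in>dom2 L. \<bar>f x - v x\<bar> \<le> e / 2)
                  \<and> (\<exists>w\<in>Vh L m. \<forall>x\<in>dom2 L. \<bar>g x - w x\<bar> \<le> e / 2)"
    then obtain v w where vw: "v \<in> Vh L m" "w \<in> Vh L m"
      and close: "\<And>x. x \<in> dom2 L \<Longrightarrow> \<bar>f x - v x\<bar> \<le> e / 2" "\<And>x. x \<in> dom2 L \<Longrightarrow> \<bar>g x - w x\<bar> \<le> e / 2"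
      by blast
    have "\<bar>f x + g x - (v x + w x)\<bar> \<le> e" if "x \<in> dom2 L" for x
    proof -
      have "\<bar>f x + g x - (v x + w x)\<bar> = \<bar>(f x - v x) + (g x - w x)\<bar>" by (simp add: algebra_simps)
      then show ?thesis using abs_triangle_ineq[of "f x - v x" "g x - w x"] close[OF that] by linarith
    qed
    then show "\<exists>vh\<in>Vh L m. \<forall>x\<in>dom2 L. \<bar>f x + g x - vh x\<bar> \<le> e"
      by (intro bexI[OF _ Vh_add[OF vw]]) simp
  qed
qed

lemma Vh_approximable_scale:
  assumes f: "Vh_approximable L f"
  shows "Vh_approximable L (\<lambda>x. a * f x)"
  unfolding Vh_approximable_def
proof (intro allI impI)
  fix e :: real assume "e > 0"
  then have "\<forall>\<^sub>F m in sequentially. \<exists>v\<in>Vh L m. \<forall>x\<in>dom2 L. \<bar>f x - v x\<bar> \<le> e / (\<bar>a\<bar> + 1)"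
    by (intro Vh_approximableD[OF f]) simp
  then show "\<forall>\<^sub>F m in sequentially. \<exists>vh\<in>Vh L m. \<forall>x\<in>dom2 L. \<bar>a * f x - vh x\<bar> \<le> e"
  proof (rule eventually_mono)
    fix m assume "\<exists>v\<in>Vh L m. \<forall>x\<in>dom2 L. \<bar>f x - v x\<bar> \<le> e / (\<bar>a\<bar> + 1)"
    then obtain v where v: "v \<in> Vh L m" and close: "\<And>x. x \<in> dom2 L \<Longrightarrow> \<bar>f x - v x\<bar> \<le> e / (\<bar>a\<bar> + 1)"
      by blast
    have "\<bar>a * f x - a * v x\<bar> \<le> e" if "x \<in> dom2 L" for x
    proof -
      have "\<bar>a * f x - a * v x\<bar> = \<bar>a\<bar> * \<bar>f x - v x\<bar>" by (simp add: abs_mult flip: right_diff_distrib)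
      also have "\<dots> \<le> (\<bar>a\<bar> + 1) * (e / (\<bar>a\<bar> + 1))"
        using close[OF that] by (intro mult_mono) auto
      finally show ?thesis by simp
    qed
    then show "\<exists>vh\<in>Vh L m. \<forall>x\<in>dom2 L. \<bar>a * f x - vh x\<bar> \<le> e"
      by (intro bexI[OF _ Vh_scale[OF v, of a]]) simp
  qed
qed

lemma Vh_approximable_uniform_limit:
  assumes "\<And>e. e > 0 \<Longrightarrow> \<exists>f. Vh_approximable L f \<and> (\<forall>x\<in>dom2 L. \<bar>g x - f x\<bar> \<le> e)"
  shows "Vh_approximable L g"
  unfolding Vh_approximable_def
proof (intro allI impI)
  fix e :: real assume "e > 0"
  then obtain f where f: "Vh_approximable L f" and fg: "\<And>x. x \<in> dom2 L \<Longrightarrow> \<bar>g x - f x\<bar> \<le> e / 2"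
    using assms[of "e / 2"] by auto
  have "\<forall>\<^sub>F m in sequentially. \<exists>v\<in>Vh L m. \<forall>x\<in>dom2 L. \<bar>f x - v x\<bar> \<le> e / 2"
    using \<open>e > 0\<close> by (intro Vh_approximableD[OF f]) simp
  then show "\<forall>\<^sub>F m in sequentially. \<exists>vh\<in>Vh L m. \<forall>x\<in>dom2 L. \<bar>g x - vh x\<bar> \<le> e"
  proof (rule eventually_mono)
    fix m assume "\<exists>v\<in>Vh L m. \<forall>x\<in>dom2 L. \<bar>f x - v x\<bar> \<le> e / 2"
    then obtain v where v: "v \<in> Vh L m" and close: "\<And>x. x \<in> dom2 L \<Longrightarrow> \<bar>f x - v x\<bar> \<le> e / 2"
      by blast
    have "\<bar>g x - v x\<bar> \<le> e" if "x \<in> dom2 L" for x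
      using abs_triangle_ineq[of "g x - f x" "f x - v x"] close[OF that] fg[OF that] by simp
    then show "\<exists>vh\<in>Vh L m. \<forall>x\<in>dom2 L. \<bar>g x - vh x\<bar> \<le> e"
      using v by blast
  qed
qed

lemma Vh_approximable_cong:
  assumes "Vh_approximable L f" and "\<And>x. x \<in> dom2 L \<Longrightarrow> f x = g x"
  shows "Vh_approximable L g"
  by (rule Vh_approximable_uniform_limit) (use assms in auto)

definition Uh_approximable :: "real \<Rightarrow> (real \<Rightarrow> real) \<Rightarrow> bool" where
  "Uh_approximable L f \<longleftrightarrow>
     (\<forall>e>0. \<forall>\<^sub>F m in sequentially. \<exists>a\<in>Uh L m. \<forall>t\<in>{-L<..L}. \<bar>f t - a t\<bar> \<le> e)"

lemma Uh_approximableD: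
  "Uh_approximable L f \<Longrightarrow> e > 0 \<Longrightarrow>
     \<forall>\<^sub>F m in sequentially. \<exists>a\<in>Uh L m. \<forall>t\<in>{-L<..L}. \<bar>f t - a t\<bar> \<le> e"
  by (simp add: Uh_approximable_def)

lemma Uh_approximable_sine_mode:
  assumes L: "L > 0" and k: "1 \<le> k"
  shows "Uh_approximable L (sine_mode L k)"
  unfolding Uh_approximable_def
proof (intro allI impI)
  fix e :: real assume e: "e > 0"
  have w: "freq L k > 0" using freq_pos[OF L k] .
  have "\<forall>\<^sub>F m in sequentially. meshh L m \<le> min (2 * e) (pi / 2) / freq L k \<and> 2 \<le> meshJ m"
    using e w by (intro eventually_conj eventually_meshh_le[OF L] eventually_two_le_meshJ) auto
  then show "\<forall>\<^sub>F m in sequentially. \<exists>a\<in>Uh L m. \<forall>t\<in>{-L<..L}. \<bar>sine_mode L k t - a t\<bar> \<le> e"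
  proof (rule eventually_mono)
    fix m assume m: "meshh L m \<le> min (2 * e) (pi / 2) / freq L k \<and> 2 \<le> meshJ m"
    then have wh: "freq L k * meshh L m \<le> min (2 * e) (pi / 2)"
      using w by (simp add: field_simps)
    then have "freq L k * meshh L m < pi" by (simp add: min_le_iff_disj) (use pi_gt_zero in linarith)
    with wh m have "\<bar>sine_mode L k t - sine_interp L m k t\<bar> \<le> e" if "t \<in> {-L<..L}" for t
      using abs_sine_interp_diff_le[OF L k _ _ that, of m] by (simp add: abs_minus_commute)
    then show "\<exists>a\<in>Uh L m. \<forall>t\<in>{-L<..L}. \<bar>sine_mode L k t - a t\<bar> \<le> e"
      using sine_interp_in_Uh by blast
  qed
qed

lemma abs_mult_diff_le:
  fixes a a' b b' :: real
  assumes "\<bar>a - a'\<bar> \<le> e1" "\<bar>b - b'\<bar> \<le> e2" "\<bar>b\<bar> \<le> B" "\<bar>a'\<bar> \<le> A"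
  shows "\<bar>a * b - a' * b'\<bar> \<le> e1 * B + A * e2"
proof -
  have "\<bar>a * b - a' * b'\<bar> = \<bar>(a - a') * b + a' * (b - b')\<bar>" by (simp add: algebra_simps)
  also have "\<dots> \<le> \<bar>a - a'\<bar> * \<bar>b\<bar> + \<bar>a'\<bar> * \<bar>b - b'\<bar>"
    by (simp add: abs_mult[symmetric] abs_triangle_ineq)
  also have "\<dots> \<le> e1 * B + A * e2"
    using assms by (intro add_mono mult_mono) auto
  finally show ?thesis .
qed

lemma abs_mult_dirichlet_solve_diff_le:
  assumes L: "L > 0" and \<eta>: "\<eta> \<le> 1"
    and f: "f integrable_on {-L..L}" "\<And>t. t \<in> {-L<..L} \<Longrightarrow> \<bar>f t\<bar> \<le> 1"
    and g: "g integrable_on {-L..L}" "\<And>t. t \<in> {-L<..L} \<Longrightarrow> \<bar>g t\<bar> \<le> 1"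
    and a: "a integrable_on {-L..L}" "\<And>t. t \<in> {-L<..L} \<Longrightarrow> \<bar>f t - a t\<bar> \<le> \<eta>"
    and b: "b integrable_on {-L..L}" "\<And>t. t \<in> {-L<..L} \<Longrightarrow> \<bar>g t - b t\<bar> \<le> \<eta>"
    and s: "s \<in> {-L<..L}"
  shows "\<bar>f s * dirichlet_solve L g t - a s * dirichlet_solve L b t\<bar> \<le> 24 * L\<^sup>2 * \<eta>"
proof -
  have "\<bar>dirichlet_solve L g t - dirichlet_solve L b t\<bar> \<le> 8 * L\<^sup>2 * \<eta>"
    unfolding dirichlet_solve_diff[OF g(1) b(1), symmetric]
    by (rule abs_dirichlet_solve_le) (use L g(1) b in \<open>auto intro: integrable_diff\<close>)
  moreover have "\<bar>dirichlet_solve L g t\<bar> \<le> 8 * L\<^sup>2 * 1"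
    by (rule abs_dirichlet_solve_le) (use L g in auto)
  moreover have "\<bar>a s\<bar> \<le> 2" using a(2)[OF s] f(2)[OF s] \<eta> by (auto simp: abs_le_iff)
  ultimately have "\<bar>f s * dirichlet_solve L g t - a s * dirichlet_solve L b t\<bar> \<le> \<eta> * (8 * L\<^sup>2 * 1) + 2 * (8 * L\<^sup>2 * \<eta>)"
    using a(2)[OF s] by (intro abs_mult_diff_le)
  then show ?thesis by (simp add: mult_ac)
qed

lemma abs_symmetric_tensor_diff_le:
  assumes L: "L > 0" and \<eta>: "\<eta> \<le> 1"
    and f: "f integrable_on {-L..L}" "\<And>t. t \<in> {-L<..L} \<Longrightarrow> \<bar>f t\<bar> \<le> 1"
    and g: "g integrable_on {-L..L}" "\<And>t. t \<in> {-L<..L} \<Longrightarrow> \<bar>g t\<bar> \<le> 1"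
    and a: "a integrable_on {-L..L}" "\<And>t. t \<in> {-L<..L} \<Longrightarrow> \<bar>f t - a t\<bar> \<le> \<eta>"
    and b: "b integrable_on {-L..L}" "\<And>t. t \<in> {-L<..L} \<Longrightarrow> \<bar>g t - b t\<bar> \<le> \<eta>"
    and x: "x \<in> dom2 L"
  shows "\<bar>f (fst x) * dirichlet_solve L g (snd x) + dirichlet_solve L f (fst x) * g (snd x)
          - (a (fst x) * dirichlet_solve L b (snd x) + dirichlet_solve L a (fst x) * b (snd x))\<bar>
         \<le> 48 * L\<^sup>2 * \<eta>"
proof -
  have x1: "fst x \<in> {-L<..L}" and x2: "snd x \<in> {-L<..L}" using x by (auto simp: dom2_def)
  have "\<bar>f (fst x) * dirichlet_solve L g (snd x) - a (fst x) * dirichlet_solve L b (snd x)\<bar> \<le> 24 * L\<^sup>2 * \<eta>"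
    by (rule abs_mult_dirichlet_solve_diff_le[OF L \<eta> f g a b x1])
  moreover have "\<bar>g (snd x) * dirichlet_solve L f (fst x) - b (snd x) * dirichlet_solve L a (fst x)\<bar> \<le> 24 * L\<^sup>2 * \<eta>"
    by (rule abs_mult_dirichlet_solve_diff_le[OF L \<eta> g f b a x2])
  moreover have "\<bar>f (fst x) * dirichlet_solve L g (snd x) + dirichlet_solve L f (fst x) * g (snd x)
      - (a (fst x) * dirichlet_solve L b (snd x) + dirichlet_solve L a (fst x) * b (snd x))\<bar>
    \<le> \<bar>f (fst x) * dirichlet_solve L g (snd x) - a (fst x) * dirichlet_solve L b (snd x)\<bar>
      + \<bar>g (snd x) * dirichlet_solve L f (fst x) - b (snd x) * dirichlet_solve L a (fst x)\<bar>"
    by (rule order_trans[OF _ abs_triangle_ineq]) (simp add: mult.commute add_diff_add)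
  ultimately show ?thesis by linarith
qed

lemma Vh_approximable_symmetric_tensor:
  assumes L: "L > 0"
    and f: "Uh_approximable L f" "f integrable_on {-L..L}" "\<And>t. t \<in> {-L<..L} \<Longrightarrow> \<bar>f t\<bar> \<le> 1"
    and g: "Uh_approximable L g" "g integrable_on {-L..L}" "\<And>t. t \<in> {-L<..L} \<Longrightarrow> \<bar>g t\<bar> \<le> 1"
  shows "Vh_approximable L (\<lambda>x. f (fst x) * dirichlet_solve L g (snd x) + dirichlet_solve L f (fst x) * g (snd x))"
  unfolding Vh_approximable_def
proof (intro allI impI)
  fix e :: real assume e: "e > 0"
  define \<eta> where "\<eta> = min 1 (e / (48 * L\<^sup>2))"
  have \<eta>: "\<eta> > 0" "\<eta> \<le> 1" "48 * L\<^sup>2 * \<eta> \<le> e" using e L by (auto simp: \<eta>_def min_def field_simps)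
  have "\<forall>\<^sub>F m in sequentially. (\<exists>a\<in>Uh L m. \<forall>t\<in>{-L<..L}. \<bar>f t - a t\<bar> \<le> \<eta>)
                                 \<and> (\<exists>b\<in>Uh L m. \<forall>t\<in>{-L<..L}. \<bar>g t - b t\<bar> \<le> \<eta>)"
    using \<eta>(1) by (intro eventually_conj Uh_approximableD[OF f(1)] Uh_approximableD[OF g(1)])
  then show "\<forall>\<^sub>F m in sequentially. \<exists>vh\<in>Vh L m. \<forall>x\<in>dom2 L.
      \<bar>f (fst x) * dirichlet_solve L g (snd x) + dirichlet_solve L f (fst x) * g (snd x) - vh x\<bar> \<le> e"
  proof (rule eventually_mono)
    fix m assume "(\<exists>a\<in>Uh L m. \<forall>t\<in>{-L<..L}. \<bar>f t - a t\<bar> \<le> \<eta>) \<and> (\<exists>b\<in>Uh L m. \<forall>t\<in>{-L<..L}. \<bar>g t - b t\<bar> \<le> \<eta>)"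
    then obtain a b where a: "a \<in> Uh L m" "\<And>t. t \<in> {-L<..L} \<Longrightarrow> \<bar>f t - a t\<bar> \<le> \<eta>"
      and b: "b \<in> Uh L m" "\<And>t. t \<in> {-L<..L} \<Longrightarrow> \<bar>g t - b t\<bar> \<le> \<eta>"
      by blast
    have "\<bar>f (fst x) * dirichlet_solve L g (snd x) + dirichlet_solve L f (fst x) * g (snd x)
          - (a (fst x) * dirichlet_solve L b (snd x) + dirichlet_solve L a (fst x) * b (snd x))\<bar> \<le> e"
      if "x \<in> dom2 L" for x
      using abs_symmetric_tensor_diff_le[OF L \<eta>(2) f(2,3) g(2,3) Uh_integrable[OF a(1)] a(2)
          Uh_integrable[OF b(1)] b(2) that] \<eta>(3) by linarith
    then show "\<exists>vh\<in>Vh L m. \<forall>x\<in>dom2 L.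
        \<bar>f (fst x) * dirichlet_solve L g (snd x) + dirichlet_solve L f (fst x) * g (snd x) - vh x\<bar> \<le> e"
      by (intro bexI[OF _ symmetric_tensor_in_Vh[OF L a(1) b(1)]]) simp
  qed
qed

lemma Vh_approximable_sine_product:
  assumes L: "L > 0" and k: "1 \<le> k" and l: "1 \<le> l"
  shows "Vh_approximable L (\<lambda>x. sine_mode L k (fst x) * sine_mode L l (snd x))"
proof -
  define \<mu> where "\<mu> = 1 / (freq L k)\<^sup>2 + 1 / (freq L l)\<^sup>2"
  have \<mu>: "\<mu> > 0" using freq_pos[OF L k] freq_pos[OF L l] by (simp add: \<mu>_def add_pos_pos)
  have bounded: "\<bar>sine_mode L j t\<bar> \<le> 1" for j t by (simp add: sine_mode_def)
  have "Vh_approximable L (\<lambda>x. 1 / \<mu> * (sine_mode L k (fst x) * dirichlet_solve L (sine_mode L l) (snd x)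
                              + dirichlet_solve L (sine_mode L k) (fst x) * sine_mode L l (snd x)))"
    by (rule Vh_approximable_scale, rule Vh_approximable_symmetric_tensor[OF L])
       (simp_all add: Uh_approximable_sine_mode[OF L k] Uh_approximable_sine_mode[OF L l]
         sine_mode_integrable bounded)
  then show ?thesis
  proof (rule Vh_approximable_cong)
    fix x assume "x \<in> dom2 L"
    then have "fst x \<in> {-L..L}" "snd x \<in> {-L..L}" by (auto simp: dom2_def)
    then have "sine_mode L k (fst x) * dirichlet_solve L (sine_mode L l) (snd x)
                + dirichlet_solve L (sine_mode L k) (fst x) * sine_mode L l (snd x)
               = \<mu> * (sine_mode L k (fst x) * sine_mode L l (snd x))"
      by (simp add: dirichlet_solve_sine_mode[OF L k] dirichlet_solve_sine_mode[OF L l] \<mu>_def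
          algebra_simps)
    then show "1 / \<mu> * (sine_mode L k (fst x) * dirichlet_solve L (sine_mode L l) (snd x)
                + dirichlet_solve L (sine_mode L k) (fst x) * sine_mode L l (snd x))
               = sine_mode L k (fst x) * sine_mode L l (snd x)"
      using \<mu> by simp
  qed
qed

section \<open>Stone--Weierstrass in the angle variables\<close>

definition angle :: "real \<Rightarrow> real \<Rightarrow> real" where
  "angle L t = pi * (t + L) / (2 * L)"

lemma sine_mode_eq_sin_angle: "sine_mode L k t = sin (real k * angle L t)"
  by (simp add: sine_mode_def freq_def angle_def mult.assoc)

lemma angle_in_0_pi:
  assumes L: "L > 0" and t: "t \<in> {-L..L}"
  shows "angle L t \<in> {0..pi}"
proof -
  have "0 \<le> (t + L) / (2 * L)" "(t + L) / (2 * L) \<le> 1" using L t by (auto simp: field_simps)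
  then have "0 \<le> pi * ((t + L) / (2 * L))" "pi * ((t + L) / (2 * L)) \<le> pi * 1"
    by (intro mult_nonneg_nonneg mult_left_mono; simp)+
  then show ?thesis by (simp add: angle_def)
qed

inductive_set sine_polys :: "(real \<Rightarrow> real) set" where
  sine_polys_sin: "(\<lambda>t. sin (real k * t)) \<in> sine_polys"
| sine_polys_add: "f \<in> sine_polys \<Longrightarrow> g \<in> sine_polys \<Longrightarrow> (\<lambda>t. f t + g t) \<in> sine_polys"
| sine_polys_scale: "f \<in> sine_polys \<Longrightarrow> (\<lambda>t. c * f t) \<in> sine_polys"

lemma sine_polys_mult_cos: "f \<in> sine_polys \<Longrightarrow> (\<lambda>t. f t * cos t) \<in> sine_polys"
proof (induction rule: sine_polys.induct)
  case (sine_polys_sin k)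
  show ?case
  proof (cases "k = 0")
    case True
    have "(\<lambda>t. 0 * sin (real 0 * t)) \<in> sine_polys" by (intro sine_polys.intros)
    with True show ?thesis by simp
  next
    case False
    have "(\<lambda>t. 1/2 * sin (real (k + 1) * t) + 1/2 * sin (real (k - 1) * t)) \<in> sine_polys"
      by (intro sine_polys.intros)
    moreover have "sin (real k * t) * cos t = 1/2 * sin (real (k + 1) * t) + 1/2 * sin (real (k - 1) * t)" for t
    proof -
      have "sin (real k * t) * cos t = (sin (real k * t + t) + sin (real k * t - t)) / 2"
        by (rule sin_times_cos)
      also have "\<dots> = 1/2 * sin (real (k + 1) * t) + 1/2 * sin (real (k - 1) * t)"
        using False by (simp add: of_nat_diff algebra_simps)
      finally show ?thesis .
    qed
    ultimately show ?thesis by simp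
  qed
next
  case (sine_polys_add f g)
  then show ?case using sine_polys.sine_polys_add by (simp add: distrib_right)
next
  case (sine_polys_scale f c)
  then show ?case using sine_polys.sine_polys_scale[of _ c] by (simp add: mult.assoc)
qed

lemma sin_mult_cos_power_in_sine_polys: "(\<lambda>t. sin t * cos t ^ i) \<in> sine_polys"
proof (induction i)
  case 0
  show ?case using sine_polys_sin[of 1] by simp
next
  case (Suc i)
  have "(\<lambda>t. sin t * cos t ^ i * cos t) \<in> sine_polys" by (rule sine_polys_mult_cos[OF Suc.IH])
  then show ?case by (simp add: mult.assoc mult.commute[of "cos _ ^ i" "cos _"])
qed

lemma Vh_approximable_sine_polys:
  assumes L: "L > 0" and a: "a \<in> sine_polys" and b: "b \<in> sine_polys"
  shows "Vh_approximable L (\<lambda>x. a (angle L (fst x)) * b (angle L (snd x)))"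
  using a
proof (induction rule: sine_polys.induct)
  case (sine_polys_sin k)
  show ?case
    using b
  proof (induction rule: sine_polys.induct)
    case (sine_polys_sin l)
    show ?case
    proof (cases "k = 0 \<or> l = 0")
      case True
      then show ?thesis by (auto intro: Vh_approximable_cong[OF Vh_approximable_zero])
    next
      case False
      then have "Vh_approximable L (\<lambda>x. sine_mode L k (fst x) * sine_mode L l (snd x))"
        by (intro Vh_approximable_sine_product[OF L]) auto
      then show ?thesis by (simp add: sine_mode_eq_sin_angle)
    qed
  next
    case (sine_polys_add f g)
    then show ?case using Vh_approximable_add by (simp add: distrib_left)
  next
    case (sine_polys_scale f c)
    then show ?case using Vh_approximable_scale[of L _ c] by (simp add: mult_ac)
  qed
next
  case (sine_polys_add f g)
  then show ?case using Vh_approximable_add by (simp add: distrib_right)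
next
  case (sine_polys_scale f c)
  then show ?case using Vh_approximable_scale[of L _ c] by (simp add: mult_ac)
qed

inductive_set cos_polys :: "real \<Rightarrow> (real \<times> real \<Rightarrow> real) set" for L where
  cos_polys_monomial: "(\<lambda>x. cos (angle L (fst x)) ^ i * cos (angle L (snd x)) ^ j) \<in> cos_polys L"
| cos_polys_add: "f \<in> cos_polys L \<Longrightarrow> g \<in> cos_polys L \<Longrightarrow> (\<lambda>x. f x + g x) \<in> cos_polys L"
| cos_polys_scale: "f \<in> cos_polys L \<Longrightarrow> (\<lambda>x. c * f x) \<in> cos_polys L"

lemma cos_polys_mult_monomial:
  "f \<in> cos_polys L \<Longrightarrow> (\<lambda>x. f x * (cos (angle L (fst x)) ^ i * cos (angle L (snd x)) ^ j)) \<in> cos_polys L"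
proof (induction rule: cos_polys.induct)
  case (cos_polys_monomial i' j')
  show ?case
    using cos_polys.cos_polys_monomial[of L "i' + i" "j' + j"] by (simp add: power_add mult_ac)
next
  case (cos_polys_add f g)
  then show ?case using cos_polys.cos_polys_add by (simp add: distrib_right)
next
  case (cos_polys_scale f c)
  then show ?case using cos_polys.cos_polys_scale[of _ L c] by (simp add: mult_ac)
qed

lemma cos_polys_mult:
  assumes f: "f \<in> cos_polys L" and g: "g \<in> cos_polys L"
  shows "(\<lambda>x. f x * g x) \<in> cos_polys L"
  using g
proof (induction rule: cos_polys.induct)
  case (cos_polys_monomial i j)
  show ?case by (rule cos_polys_mult_monomial[OF f])
next
  case (cos_polys_add g1 g2)
  then show ?case using cos_polys.cos_polys_add by (simp add: distrib_left)
next
  case (cos_polys_scale g c)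
  then show ?case using cos_polys.cos_polys_scale[of _ L c] by (simp add: mult_ac)
qed

lemma cos_polys_const: "(\<lambda>x. c) \<in> cos_polys L"
  using cos_polys_scale[OF cos_polys_monomial[of L 0 0], of c] by simp

lemma continuous_on_cos_polys:
  assumes "L > 0" and "f \<in> cos_polys L"
  shows "continuous_on S f"
  using assms(2) by induction (use assms(1) in \<open>auto simp: angle_def intro!: continuous_intros\<close>)

lemma function_ring_on_cos_polys:
  assumes L: "L > 0"
  shows "function_ring_on (cos_polys L) ({-L..L} \<times> {-L..L})"
proof unfold_locales
  show "compact ({-L..L} \<times> {-L..L})" by (intro compact_Times compact_Icc)
  show "continuous_on ({-L..L} \<times> {-L..L}) f" if "f \<in> cos_polys L" for f
    using continuous_on_cos_polys[OF L that] .
  show "(\<lambda>x. f x + g x) \<in> cos_polys L" if "f \<in> cos_polys L" "g \<in> cos_polys L" for f g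
    using cos_polys_add[OF that] .
  show "(\<lambda>x. f x * g x) \<in> cos_polys L" if "f \<in> cos_polys L" "g \<in> cos_polys L" for f g
    using cos_polys_mult[OF that] .
  show "(\<lambda>_. c) \<in> cos_polys L" for c by (rule cos_polys_const)
  have inj: "s = t" if "cos (angle L s) = cos (angle L t)" "s \<in> {-L..L}" "t \<in> {-L..L}" for s t
  proof -
    have "angle L s = angle L t"
      using cos_inj_pi angle_in_0_pi[OF L that(2)] angle_in_0_pi[OF L that(3)] that(1) by auto
    then show "s = t" using L by (simp add: angle_def)
  qed
  show "\<exists>f\<in>cos_polys L. f x \<noteq> f y"
    if "x \<in> {-L..L} \<times> {-L..L}" "y \<in> {-L..L} \<times> {-L..L}" "x \<noteq> y" for x y
  proof (cases "fst x = fst y")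
    case False
    then have "cos (angle L (fst x)) \<noteq> cos (angle L (fst y))" using inj that by (auto simp: mem_Times_iff)
    then show ?thesis
      by (intro bexI[OF _ cos_polys_monomial[of L 1 0]]) simp
  next
    case True
    then have "snd x \<noteq> snd y" using that(3) by (simp add: prod_eq_iff)
    then have "cos (angle L (snd x)) \<noteq> cos (angle L (snd y))" using inj that by (auto simp: mem_Times_iff)
    then show ?thesis
      by (intro bexI[OF _ cos_polys_monomial[of L 0 1]]) simp
  qed
qed

definition sin_weight :: "real \<Rightarrow> real \<times> real \<Rightarrow> real" where
  "sin_weight L x = sin (angle L (fst x)) * sin (angle L (snd x))"

lemma Vh_approximable_sin_weight_mult:
  assumes L: "L > 0"
  shows "f \<in> cos_polys L \<Longrightarrow> Vh_approximable L (\<lambda>x. sin_weight L x * f x)"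
proof (induction rule: cos_polys.induct)
  case (cos_polys_monomial i j)
  have "Vh_approximable L (\<lambda>x. (\<lambda>t. sin t * cos t ^ i) (angle L (fst x)) * (\<lambda>t. sin t * cos t ^ j) (angle L (snd x)))"
    by (rule Vh_approximable_sine_polys[OF L sin_mult_cos_power_in_sine_polys sin_mult_cos_power_in_sine_polys])
  then show ?case by (simp add: sin_weight_def mult_ac)
next
  case (cos_polys_add f g)
  then show ?case using Vh_approximable_add by (simp add: distrib_left)
next
  case (cos_polys_scale f c)
  then show ?case using Vh_approximable_scale[of L _ c] by (simp add: mult_ac)
qed

lemma sin_le_sin_between:
  fixes a x :: real
  assumes "0 \<le> a" "a \<le> pi / 2" "a \<le> x" "x \<le> pi - a"
  shows "sin a \<le> sin x"
proof (cases "x \<le> pi / 2")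
  case True
  then show ?thesis using assms by (intro sin_monotone_2pi_le) auto
next
  case False
  have "sin a \<le> sin (pi - x)" using assms False by (intro sin_monotone_2pi_le) auto
  then show ?thesis by simp
qed

lemma sin_weight_ge:
  assumes L: "L > 0" and d: "0 < d" "d < L"
    and x: "fst x \<in> {-L+d..L-d}" "snd x \<in> {-L+d..L-d}"
  shows "sin (pi * d / (2 * L)) ^ 2 \<le> sin_weight L x"
proof -
  define a where "a = pi * d / (2 * L)"
  have a: "0 < a" "a < pi / 2" using L d by (auto simp: a_def field_simps)
  have sin_le: "sin a \<le> sin (angle L t)" if "t \<in> {-L+d..L-d}" for t
  proof (rule sin_le_sin_between)
    have "pi * d / (2 * L) \<le> pi * (t + L) / (2 * L)" "pi * (t + L) / (2 * L) \<le> pi * (2 * L - d) / (2 * L)"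
      using that L by (intro divide_right_mono mult_left_mono; simp)+
    moreover have "pi * (2 * L - d) / (2 * L) = pi - a" using L by (simp add: a_def field_simps)
    ultimately show "a \<le> angle L t" "angle L t \<le> pi - a" by (simp_all add: a_def angle_def)
  qed (use a in auto)
  moreover have "0 \<le> sin a" using a by (intro sin_ge_zero) auto
  moreover have "sin a \<le> sin (angle L (fst x))" "sin a \<le> sin (angle L (snd x))"
    using sin_le x by auto
  ultimately have "sin a * sin a \<le> sin_weight L x"
    unfolding sin_weight_def by (intro mult_mono) auto
  then show ?thesis by (simp add: a_def power2_eq_square)
qed

text \<open>Dividing by \<open>max (sin_weight L x) c\<close> instead of \<open>sin_weight L x\<close> keeps the quotient continuous
  up to the boundary, and changes nothing on the support of \<open>g\<close>, where \<open>c \<le> sin_weight L x\<close>.\<close>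
lemma inner_support_eq_sin_weight_mult:
  assumes L: "L > 0" and d: "0 < d" "d < L" and g: "continuous_on UNIV g"
    and supp: "\<And>x. \<not> (fst x \<in> {-L+d..L-d} \<and> snd x \<in> {-L+d..L-d}) \<Longrightarrow> g x = 0"
  obtains q where "continuous_on UNIV q" "\<And>x. g x = sin_weight L x * q x"
proof
  define c where "c = sin (pi * d / (2 * L)) ^ 2"
  have "0 < pi * d / (2 * L)" "pi * d / (2 * L) < pi" using L d by (auto simp: field_simps)
  then have c: "c > 0" unfolding c_def by (intro zero_less_power sin_gt_zero)
  show "continuous_on UNIV (\<lambda>x. g x / max (sin_weight L x) c)"
    unfolding sin_weight_def angle_def using c L by (intro continuous_intros g) auto
  fix x
  show "g x = sin_weight L x * (g x / max (sin_weight L x) c)"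
  proof (cases "fst x \<in> {-L+d..L-d} \<and> snd x \<in> {-L+d..L-d}")
    case True
    then have "c \<le> sin_weight L x" unfolding c_def using sin_weight_ge[OF L d] by blast
    then show ?thesis using c by (simp add: max_def)
  next
    case False
    then show ?thesis using supp[OF False] by simp
  qed
qed

lemma Vh_approximable_continuous:
  assumes L: "L > 0" and d: "0 < d" "d < L" and g: "continuous_on UNIV g"
    and supp: "\<And>x. \<not> (fst x \<in> {-L+d..L-d} \<and> snd x \<in> {-L+d..L-d}) \<Longrightarrow> g x = 0"
  shows "Vh_approximable L g"
proof -
  obtain q where q: "continuous_on UNIV q" and g_eq: "\<And>x. g x = sin_weight L x * q x"
    using inner_support_eq_sin_weight_mult[OF L d g supp] by blast
  show ?thesis
  proof (rule Vh_approximable_uniform_limit)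
    fix e :: real assume "e > 0"
    then obtain P where P: "P \<in> cos_polys L" and PA: "\<forall>x\<in>{-L..L} \<times> {-L..L}. \<bar>q x - P x\<bar> < e"
      using function_ring_on.Stone_Weierstrass_basic[OF function_ring_on_cos_polys[OF L]
          continuous_on_subset[OF q]] by blast
    have "\<bar>g x - sin_weight L x * P x\<bar> \<le> e" if "x \<in> dom2 L" for x
    proof -
      have "x \<in> {-L..L} \<times> {-L..L}" using that by (auto simp: dom2_def)
      then have "\<bar>q x - P x\<bar> \<le> e" using bspec[OF PA] by (meson less_imp_le)
      moreover have "\<bar>sin_weight L x\<bar> \<le> 1" by (auto simp: sin_weight_def abs_mult intro: mult_le_one)
      ultimately have "\<bar>sin_weight L x\<bar> * \<bar>q x - P x\<bar> \<le> 1 * e" by (intro mult_mono) auto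
      then show ?thesis by (simp add: g_eq abs_mult flip: right_diff_distrib)
    qed
    then show "\<exists>f. Vh_approximable L f \<and> (\<forall>x\<in>dom2 L. \<bar>g x - f x\<bar> \<le> e)"
      using Vh_approximable_sin_weight_mult[OF L P] by blast
  qed
qed

section \<open>\<open>L\<^sup>p\<close> estimates\<close>

lemma abs_diff_powr_le:
  fixes a b c p :: real
  assumes "p > 0"
  shows "\<bar>a - c\<bar> powr p \<le> 2 powr p * (\<bar>a - b\<bar> powr p + \<bar>b - c\<bar> powr p)"
proof -
  define M where "M = max \<bar>a - b\<bar> \<bar>b - c\<bar>"
  have "\<bar>a - c\<bar> \<le> \<bar>a - b\<bar> + \<bar>b - c\<bar>" using abs_triangle_ineq[of "a - b" "b - c"] by simp
  moreover have "\<bar>a - b\<bar> \<le> M" "\<bar>b - c\<bar> \<le> M" by (simp_all add: M_def)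
  ultimately have "\<bar>a - c\<bar> \<le> 2 * M" by linarith
  then have "\<bar>a - c\<bar> powr p \<le> (2 * M) powr p" using assms by (intro powr_mono2) auto
  also have "\<dots> = 2 powr p * M powr p" by (simp add: powr_mult M_def)
  also have "\<dots> \<le> 2 powr p * (\<bar>a - b\<bar> powr p + \<bar>b - c\<bar> powr p)"
    by (intro mult_left_mono) (auto simp: M_def max_def)
  finally show ?thesis .
qed

lemma set_integral_nonneg:
  fixes f :: "'a \<Rightarrow> real"
  assumes "\<And>x. x \<in> A \<Longrightarrow> 0 \<le> f x"
  shows "0 \<le> (LINT x:A|M. f x)"
  unfolding set_lebesgue_integral_def
  by (rule integral_nonneg_AE) (use assms in \<open>auto simp: indicator_def\<close>)

text \<open>No measurability of \<open>h\<close> is needed: if \<open>|f - h|\<^sup>p\<close> is not integrable, its integral is \<open>0\<close>.\<close>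
lemma set_integral_abs_diff_powr_le:
  fixes f g h k :: "'a \<Rightarrow> real"
  assumes p: "p > 0"
    and fg: "set_integrable M A (\<lambda>x. \<bar>f x - g x\<bar> powr p)" and k: "set_integrable M A k"
    and gh: "\<And>x. x \<in> A \<Longrightarrow> \<bar>g x - h x\<bar> powr p \<le> k x"
  shows "(LINT x:A|M. \<bar>f x - h x\<bar> powr p)
           \<le> 2 powr p * ((LINT x:A|M. \<bar>f x - g x\<bar> powr p) + (LINT x:A|M. k x))"
proof (cases "set_integrable M A (\<lambda>x. \<bar>f x - h x\<bar> powr p)")
  case True
  have "(LINT x:A|M. \<bar>f x - h x\<bar> powr p) \<le> (LINT x:A|M. 2 powr p * (\<bar>f x - g x\<bar> powr p + k x))"
  proof (rule set_integral_mono[OF True])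
    show "set_integrable M A (\<lambda>x. 2 powr p * (\<bar>f x - g x\<bar> powr p + k x))"
      using fg k by simp
    fix x assume "x \<in> A"
    have "\<bar>f x - h x\<bar> powr p \<le> 2 powr p * (\<bar>f x - g x\<bar> powr p + \<bar>g x - h x\<bar> powr p)"
      by (rule abs_diff_powr_le[OF p])
    also have "\<dots> \<le> 2 powr p * (\<bar>f x - g x\<bar> powr p + k x)"
      using gh[OF \<open>x \<in> A\<close>] by (intro mult_left_mono add_left_mono) auto
    finally show "\<bar>f x - h x\<bar> powr p \<le> 2 powr p * (\<bar>f x - g x\<bar> powr p + k x)" .
  qed
  also have "\<dots> = 2 powr p * ((LINT x:A|M. \<bar>f x - g x\<bar> powr p) + (LINT x:A|M. k x))"
    using fg k by simp
  finally show ?thesis .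
next
  case False
  have "0 \<le> k x" if "x \<in> A" for x using gh[OF that] powr_ge_zero order_trans by blast
  then have "0 \<le> 2 powr p * ((LINT x:A|M. \<bar>f x - g x\<bar> powr p) + (LINT x:A|M. k x))"
    by (intro mult_nonneg_nonneg add_nonneg_nonneg set_integral_nonneg) auto
  with False show ?thesis
    by (simp add: set_lebesgue_integral_def set_integrable_def not_integrable_integral_eq)
qed

lemma set_integral_abs_diff_powr_le_uniform:
  fixes f g h :: "'a \<Rightarrow> real"
  assumes p: "p > 0" and A: "A \<in> sets M" "emeasure M A < \<infinity>"
    and fg: "set_integrable M A (\<lambda>x. \<bar>f x - g x\<bar> powr p)"
    and gh: "\<And>x. x \<in> A \<Longrightarrow> \<bar>g x - h x\<bar> \<le> \<eta>"
  shows "(LINT x:A|M. \<bar>f x - h x\<bar> powr p)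
           \<le> 2 powr p * ((LINT x:A|M. \<bar>f x - g x\<bar> powr p) + \<eta> powr p * measure M A)"
proof -
  have "set_integrable M A (\<lambda>_. \<eta> powr p)"
    using A unfolding set_integrable_def by (intro integrable_indicator)
  then have "(LINT x:A|M. \<bar>f x - h x\<bar> powr p)
           \<le> 2 powr p * ((LINT x:A|M. \<bar>f x - g x\<bar> powr p) + (LINT x:A|M. \<eta> powr p))"
    using p by (intro set_integral_abs_diff_powr_le[OF p fg] powr_mono2 gh) auto
  with A show ?thesis by (simp add: set_integral_const mult.commute)
qed

lemma set_integrable_abs_diff_powr:
  fixes f g h k :: "'a \<Rightarrow> real"
  assumes p: "p > 0" and meas: "set_borel_measurable M A (\<lambda>x. \<bar>f x - h x\<bar> powr p)"
    and fg: "set_integrable M A (\<lambda>x. \<bar>f x - g x\<bar> powr p)" and k: "set_integrable M A k"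
    and gh: "\<And>x. x \<in> A \<Longrightarrow> \<bar>g x - h x\<bar> powr p \<le> k x"
  shows "set_integrable M A (\<lambda>x. \<bar>f x - h x\<bar> powr p)"
proof (rule set_integrable_bound[OF _ meas])
  show "set_integrable M A (\<lambda>x. 2 powr p * (\<bar>f x - g x\<bar> powr p + k x))"
    using fg k by simp
  have "\<bar>f x - h x\<bar> powr p \<le> 2 powr p * (\<bar>f x - g x\<bar> powr p + k x)" if "x \<in> A" for x
  proof -
    have "\<bar>f x - h x\<bar> powr p \<le> 2 powr p * (\<bar>f x - g x\<bar> powr p + \<bar>g x - h x\<bar> powr p)"
      by (rule abs_diff_powr_le[OF p])
    also have "\<dots> \<le> 2 powr p * (\<bar>f x - g x\<bar> powr p + k x)"
      using gh[OF that] by (intro mult_left_mono add_left_mono) auto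
    finally show ?thesis .
  qed
  then show "AE x in M. x \<in> A \<longrightarrow>
      norm (\<bar>f x - h x\<bar> powr p) \<le> norm (2 powr p * (\<bar>f x - g x\<bar> powr p + k x))"
    by (intro AE_I2) (force intro: order_trans[OF _ abs_ge_self])
qed

lemma INF_Lp_norm_tendsto_zero:
  assumes p: "p > 0"
    and approx: "\<And>\<epsilon>. \<epsilon> > 0 \<Longrightarrow> \<forall>\<^sub>F m in sequentially. \<exists>w\<in>V m. (LINT x:D|lebesgue. \<bar>v x - w x\<bar> powr p) \<le> \<epsilon>"
  shows "(\<lambda>m. INF w \<in> V m. Lp_norm p D (\<lambda>x. v x - w x)) \<longlonglongrightarrow> 0"
proof -
  define err where "err w = Lp_norm p D (\<lambda>x. v x - w x)" for w
  have nonneg: "0 \<le> err w" for w by (simp add: err_def Lp_norm_def)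
  have bound: "\<forall>\<^sub>F m in sequentially. 0 \<le> (INF w \<in> V m. err w) \<and> (INF w \<in> V m. err w) \<le> r"
    if r: "r > 0" for r
  proof -
    have "\<forall>\<^sub>F m in sequentially. \<exists>w\<in>V m. (LINT x:D|lebesgue. \<bar>v x - w x\<bar> powr p) \<le> r powr p"
      using r by (intro approx) simp
    then show ?thesis
    proof (rule eventually_mono)
      fix m assume "\<exists>w\<in>V m. (LINT x:D|lebesgue. \<bar>v x - w x\<bar> powr p) \<le> r powr p"
      then obtain w where w: "w \<in> V m" and close: "(LINT x:D|lebesgue. \<bar>v x - w x\<bar> powr p) \<le> r powr p"
        by blast
      have "err w \<le> (r powr p) powr (1 / p)"
        unfolding err_def Lp_norm_def using close p by (intro powr_mono2 set_integral_nonneg) auto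
      also have "\<dots> = r" using r p by (simp add: powr_powr)
      finally have "(INF w \<in> V m. err w) \<le> r"
        using cINF_lower[OF bdd_belowI[of _ 0] w, of err] nonneg by force
      moreover have "0 \<le> (INF w \<in> V m. err w)"
        using w nonneg by (intro cINF_greatest) auto
      ultimately show "0 \<le> (INF w \<in> V m. err w) \<and> (INF w \<in> V m. err w) \<le> r" by simp
    qed
  qed
  have "(\<lambda>m. INF w \<in> V m. err w) \<longlonglongrightarrow> 0"
  proof (rule order_tendstoI)
    fix a :: real assume "a < 0"
    have "\<forall>\<^sub>F m in sequentially. 0 \<le> (INF w \<in> V m. err w) \<and> (INF w \<in> V m. err w) \<le> 1"
      by (rule bound) simp
    then show "\<forall>\<^sub>F m in sequentially. a < (INF w \<in> V m. err w)"
      by eventually_elim (use \<open>a < 0\<close> in linarith)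
  next
    fix a :: real assume "0 < a"
    have "\<forall>\<^sub>F m in sequentially. 0 \<le> (INF w \<in> V m. err w) \<and> (INF w \<in> V m. err w) \<le> a / 2"
      using \<open>0 < a\<close> by (intro bound) simp
    then show "\<forall>\<^sub>F m in sequentially. (INF w \<in> V m. err w) < a"
      by eventually_elim (use \<open>0 < a\<close> in linarith)
  qed
  then show ?thesis by (simp add: err_def)
qed

section \<open>Density of continuous functions and the main result\<close>

lemma set_integral_dominated_tendsto_zero:
  fixes s :: "nat \<Rightarrow> 'a \<Rightarrow> real"
  assumes A: "A \<in> sets M" and s: "\<And>n. s n \<in> borel_measurable M" and k: "set_integrable M A k"
    and bound: "\<And>n x. x \<in> A \<Longrightarrow> \<bar>s n x\<bar> \<le> k x"
    and lim: "AE x in M. x \<in> A \<longrightarrow> (\<lambda>n. s n x) \<longlonglongrightarrow> 0"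
  shows "set_integrable M A (s n)" and "(\<lambda>n. LINT x:A|M. s n x) \<longlonglongrightarrow> 0"
proof -
  have meas: "(\<lambda>x. indicator A x * s n x) \<in> borel_measurable M" for n
    using A s by measurable
  have int: "integrable M (\<lambda>x. indicator A x * k x)"
    using k by (simp add: set_integrable_def)
  have lim': "AE x in M. (\<lambda>n. indicator A x * s n x) \<longlonglongrightarrow> 0"
    using lim by eventually_elim (auto simp: indicator_def)
  have bound': "AE x in M. norm (indicator A x * s n x) \<le> indicator A x * k x" for n
    using bound by (intro AE_I2) (auto simp: indicator_def)
  show "set_integrable M A (s n)"
    unfolding set_integrable_def
    using integrable_dominated_convergence2[OF _ meas int lim' bound'] by simp
  show "(\<lambda>n. LINT x:A|M. s n x) \<longlonglongrightarrow> 0"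
    unfolding set_lebesgue_integral_def
    using integral_dominated_convergence[OF _ meas int lim' bound'] by simp
qed

lemma continuous_imp_borel_measurable_lebesgue:
  fixes f :: "'a::euclidean_space \<Rightarrow> real"
  shows "continuous_on UNIV f \<Longrightarrow> f \<in> borel_measurable lebesgue"
  using continuous_imp_measurable_on_sets_lebesgue[of UNIV f] lebesgue_on_UNIV_eq by simp

definition clip :: "real \<Rightarrow> real \<Rightarrow> real" where
  "clip B y = max (- B) (min B y)"

lemma abs_clip_le: "0 \<le> B \<Longrightarrow> \<bar>clip B y\<bar> \<le> B"
  by (auto simp: clip_def)

lemma clip_eq_self: "\<bar>y\<bar> \<le> B \<Longrightarrow> clip B y = y"
  by (auto simp: clip_def)

lemma abs_sub_clip_mult_le:
  assumes "0 \<le> B" "0 \<le> r" "r \<le> 1"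
  shows "\<bar>y - clip B y * r\<bar> \<le> \<bar>y\<bar>"
proof (cases "y \<ge> 0")
  case True
  then have "0 \<le> clip B y" "clip B y \<le> y" using assms by (auto simp: clip_def)
  moreover have "0 \<le> clip B y * r" "clip B y * r \<le> clip B y"
    using assms \<open>0 \<le> clip B y\<close> by (auto simp: mult_left_le)
  ultimately show ?thesis using True by (simp add: abs_le_iff)
next
  case False
  then have "clip B y \<le> 0" "y \<le> clip B y" using assms by (auto simp: clip_def)
  moreover have "clip B y \<le> clip B y * r" "clip B y * r \<le> 0"
    using assms \<open>clip B y \<le> 0\<close> mult_left_mono_neg[of r 1 "clip B y"]
    by (auto simp: mult_nonpos_nonneg)
  ultimately show ?thesis using False by (simp add: abs_le_iff)
qed

lemma bounded_measurable_Lp_approx_continuous: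
  fixes f :: "'a::euclidean_space \<Rightarrow> real"
  assumes p: "p > 0" and A: "A \<in> lmeasurable" and f: "f \<in> borel_measurable lebesgue"
    and B: "\<And>x. \<bar>f x\<bar> \<le> B"
  obtains G where "\<And>n. continuous_on UNIV (G n)"
    "\<And>n. set_integrable lebesgue A (\<lambda>x. \<bar>f x - G n x\<bar> powr p)"
    "(\<lambda>n. LINT x:A|lebesgue. \<bar>f x - G n x\<bar> powr p) \<longlonglongrightarrow> 0"
proof -
  have B0: "0 \<le> B" using B order_trans abs_ge_zero by blast
  have "f measurable_on UNIV" by (rule lebesgue_measurable_imp_measurable_on[OF f]) simp
  then obtain Z F where Z: "negligible Z" and F: "\<And>n. continuous_on UNIV (F n)"
    and lim: "\<And>x. x \<notin> Z \<Longrightarrow> (\<lambda>n. F n x) \<longlonglongrightarrow> f x"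
    unfolding measurable_on_def by auto
  define G where "G n x = clip B (F n x)" for n x
  have G: "continuous_on UNIV (G n)" for n
    unfolding G_def[abs_def] clip_def using F by (intro continuous_intros)
  have A_sets: "A \<in> sets lebesgue" using A by (simp add: fmeasurable_def)
  have int: "set_integrable lebesgue A (\<lambda>_. (2 * B) powr p)"
    using A unfolding set_integrable_def fmeasurable_def by (intro integrable_indicator) auto
  have meas: "(\<lambda>x. \<bar>f x - G n x\<bar> powr p) \<in> borel_measurable lebesgue" for n
    using f continuous_imp_borel_measurable_lebesgue[OF G] by measurable
  have bound: "\<bar>\<bar>f x - G n x\<bar> powr p\<bar> \<le> (2 * B) powr p" if "x \<in> A" for n x
  proof -
    have "\<bar>f x - G n x\<bar> \<le> 2 * B"
      using B[of x] abs_clip_le[OF B0, of "F n x"] unfolding G_def abs_le_iff by linarith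
    then show ?thesis using p by (simp add: powr_mono2)
  qed
  have lim: "AE x in lebesgue. x \<in> A \<longrightarrow> (\<lambda>n. \<bar>f x - G n x\<bar> powr p) \<longlonglongrightarrow> 0"
  proof -
    have "AE x in lebesgue. x \<notin> Z" using Z by (intro AE_not_in) (simp add: negligible_iff_null_sets)
    then show ?thesis
    proof eventually_elim
      case (elim x)
      have "(\<lambda>n. G n x) \<longlonglongrightarrow> clip B (f x)"
        unfolding G_def clip_def by (intro tendsto_intros lim elim)
      then have "(\<lambda>n. \<bar>f x - G n x\<bar>) \<longlonglongrightarrow> \<bar>f x - f x\<bar>"
        unfolding clip_eq_self[OF B] by (intro tendsto_intros)
      then have "(\<lambda>n. \<bar>f x - G n x\<bar>) \<longlonglongrightarrow> 0" by simp
      then show ?case using p by (auto intro: tendsto_zero_powrI)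
    qed
  qed
  note dominated = set_integral_dominated_tendsto_zero[OF A_sets meas int bound lim]
  show ?thesis by (rule that[OF G dominated(1) dominated(2)])
qed

definition cutoff :: "real \<Rightarrow> nat \<Rightarrow> real \<Rightarrow> real" where
  "cutoff L n t = min 1 (max 0 (real n * (L - \<bar>t\<bar>) - 1))"

definition cutoff2 :: "real \<Rightarrow> nat \<Rightarrow> real \<times> real \<Rightarrow> real" where
  "cutoff2 L n x = cutoff L n (fst x) * cutoff L n (snd x)"

lemma cutoff2_nonneg: "0 \<le> cutoff2 L n x"
  by (simp add: cutoff2_def cutoff_def)

lemma cutoff2_le_one: "cutoff2 L n x \<le> 1"
  by (simp add: cutoff2_def cutoff_def mult_le_one)

lemma continuous_on_cutoff2: "continuous_on S (cutoff2 L n)"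
  unfolding cutoff2_def[abs_def] cutoff_def by (intro continuous_intros)

lemma cutoff2_eq_zero:
  assumes n: "0 < n" and x: "\<not> (fst x \<in> {-L + 1 / real n..L - 1 / real n} \<and> snd x \<in> {-L + 1 / real n..L - 1 / real n})"
  shows "cutoff2 L n x = 0"
proof -
  have "cutoff L n t = 0" if "t \<notin> {-L + 1 / real n..L - 1 / real n}" for t
  proof -
    have "L - \<bar>t\<bar> < 1 / real n" using that by auto
    then have "real n * (L - \<bar>t\<bar>) < 1" using n by (simp add: field_simps)
    then show ?thesis by (simp add: cutoff_def)
  qed
  with x show ?thesis by (auto simp: cutoff2_def)
qed

lemma eventually_cutoff2_eq_one:
  assumes "x \<in> dom2 L"
  shows "\<forall>\<^sub>F n in sequentially. cutoff2 L n x = 1"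
proof -
  have one: "\<forall>\<^sub>F n in sequentially. cutoff L n t = 1" if "\<bar>t\<bar> < L" for t
  proof -
    obtain N :: nat where N: "2 / (L - \<bar>t\<bar>) < real N" using reals_Archimedean2 by blast
    show ?thesis
    proof (rule eventually_sequentiallyI[of N])
      fix n assume "N \<le> n"
      then have "2 / (L - \<bar>t\<bar>) < real n" using N by (meson less_le_trans of_nat_le_iff)
      then have "2 < real n * (L - \<bar>t\<bar>)" using that by (simp add: field_simps)
      then show "cutoff L n t = 1" by (simp add: cutoff_def)
    qed
  qed
  have "\<bar>fst x\<bar> < L" "\<bar>snd x\<bar> < L" using assms by (auto simp: dom2_def)
  then have "\<forall>\<^sub>F n in sequentially. cutoff L n (fst x) = 1" "\<forall>\<^sub>F n in sequentially. cutoff L n (snd x) = 1"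
    by (simp_all add: one)
  then show ?thesis
    unfolding cutoff2_def by eventually_elim simp
qed

lemma dom2_lmeasurable: "dom2 L \<in> lmeasurable"
  unfolding dom2_def by (intro lmeasurable_open bounded_Times open_Times) auto

lemma Lp_truncation:
  assumes p: "p > 0" and w: "w \<in> borel_measurable lebesgue"
    and wi: "set_integrable lebesgue (dom2 L) (\<lambda>x. \<bar>w x\<bar> powr p)"
  shows "set_integrable lebesgue (dom2 L) (\<lambda>x. \<bar>w x - clip n (w x) * cutoff2 L n x\<bar> powr p)"
    and "(\<lambda>n. LINT x:dom2 L|lebesgue. \<bar>w x - clip n (w x) * cutoff2 L n x\<bar> powr p) \<longlonglongrightarrow> 0"
proof -
  have D: "dom2 L \<in> sets lebesgue" using dom2_lmeasurable by (simp add: fmeasurable_def)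
  have [measurable]: "cutoff2 L n \<in> borel_measurable lebesgue" for n
    by (rule continuous_imp_borel_measurable_lebesgue[OF continuous_on_cutoff2])
  have meas: "(\<lambda>x. \<bar>w x - clip n (w x) * cutoff2 L n x\<bar> powr p) \<in> borel_measurable lebesgue" for n
    using w unfolding clip_def by measurable
  have bound: "\<bar>\<bar>w x - clip n (w x) * cutoff2 L n x\<bar> powr p\<bar> \<le> \<bar>w x\<bar> powr p" for n :: nat and x
    using p abs_sub_clip_mult_le[of "real n" "cutoff2 L n x" "w x"] cutoff2_nonneg cutoff2_le_one
    by (simp add: powr_mono2)
  have lim: "(\<lambda>n. \<bar>w x - clip n (w x) * cutoff2 L n x\<bar> powr p) \<longlonglongrightarrow> 0" if x: "x \<in> dom2 L" for x
  proof (rule tendsto_eventually)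
    obtain N :: nat where "\<bar>w x\<bar> \<le> real N" using real_arch_simple by blast
    then have "\<forall>\<^sub>F n in sequentially. \<bar>w x\<bar> \<le> real n"
      by (intro eventually_sequentiallyI[of N]) (meson order.trans of_nat_le_iff)
    with eventually_cutoff2_eq_one[OF x]
    show "\<forall>\<^sub>F n in sequentially. \<bar>w x - clip n (w x) * cutoff2 L n x\<bar> powr p = 0"
      by eventually_elim (simp add: clip_eq_self)
  qed
  note dominated = set_integral_dominated_tendsto_zero[OF D meas wi bound]
  show "set_integrable lebesgue (dom2 L) (\<lambda>x. \<bar>w x - clip n (w x) * cutoff2 L n x\<bar> powr p)"
    by (rule dominated(1)) (use lim in \<open>auto intro: AE_I2\<close>)
  show "(\<lambda>n. LINT x:dom2 L|lebesgue. \<bar>w x - clip n (w x) * cutoff2 L n x\<bar> powr p) \<longlonglongrightarrow> 0"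
    by (rule dominated(2)) (use lim in \<open>auto intro: AE_I2\<close>)
qed

lemma Lp_approx_cutoff_by_continuous:
  assumes p: "p > 0" and w: "w \<in> borel_measurable lebesgue" and \<delta>: "\<delta> > 0"
  obtains g where "continuous_on UNIV g" "\<And>x. cutoff2 L N x = 0 \<Longrightarrow> g x = 0"
    "set_integrable lebesgue (dom2 L) (\<lambda>x. \<bar>clip N (w x) * cutoff2 L N x - g x\<bar> powr p)"
    "(LINT x:dom2 L|lebesgue. \<bar>clip N (w x) * cutoff2 L N x - g x\<bar> powr p) < \<delta>"
proof -
  have clip_meas: "(\<lambda>x. clip N (w x)) \<in> borel_measurable lebesgue" using w unfolding clip_def by measurable
  have clip_bound: "\<bar>clip N (w x)\<bar> \<le> real N" for x by (simp add: abs_clip_le)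
  obtain G where G: "\<And>n. continuous_on UNIV (G n)"
    and G_int: "\<And>n. set_integrable lebesgue (dom2 L) (\<lambda>x. \<bar>clip N (w x) - G n x\<bar> powr p)"
    and G_lim: "(\<lambda>n. LINT x:dom2 L|lebesgue. \<bar>clip N (w x) - G n x\<bar> powr p) \<longlonglongrightarrow> 0"
    using bounded_measurable_Lp_approx_continuous[OF p dom2_lmeasurable clip_meas clip_bound] by blast
  obtain n where approx: "(LINT x:dom2 L|lebesgue. \<bar>clip N (w x) - G n x\<bar> powr p) < \<delta>"
    using eventually_happens'[OF sequentially_bot order_tendstoD(2)[OF G_lim \<delta>]] by blast
  define g where "g x = G n x * cutoff2 L N x" for x
  have g: "continuous_on UNIV g"
    unfolding g_def[abs_def] by (intro continuous_intros G continuous_on_cutoff2)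
  have close: "\<bar>clip N (w x) * cutoff2 L N x - g x\<bar> powr p \<le> \<bar>clip N (w x) - G n x\<bar> powr p" for x
  proof -
    have "\<bar>clip N (w x) * cutoff2 L N x - g x\<bar> = \<bar>clip N (w x) - G n x\<bar> * cutoff2 L N x"
      by (simp add: g_def abs_mult cutoff2_nonneg flip: left_diff_distrib)
    also have "\<dots> \<le> \<bar>clip N (w x) - G n x\<bar>"
      using cutoff2_le_one by (simp add: mult_left_le)
    finally show ?thesis using p by (simp add: powr_mono2)
  qed
  have [measurable]: "g \<in> borel_measurable lebesgue"
    by (rule continuous_imp_borel_measurable_lebesgue[OF g])
  have [measurable]: "cutoff2 L N \<in> borel_measurable lebesgue"
    by (rule continuous_imp_borel_measurable_lebesgue[OF continuous_on_cutoff2])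
  have int: "set_integrable lebesgue (dom2 L) (\<lambda>x. \<bar>clip N (w x) * cutoff2 L N x - g x\<bar> powr p)"
  proof (rule set_integrable_bound[OF G_int])
    show "set_borel_measurable lebesgue (dom2 L) (\<lambda>x. \<bar>clip N (w x) * cutoff2 L N x - g x\<bar> powr p)"
      using w dom2_lmeasurable unfolding set_borel_measurable_def clip_def by measurable
  qed (use close in \<open>auto intro!: AE_I2\<close>)
  have "(LINT x:dom2 L|lebesgue. \<bar>clip N (w x) * cutoff2 L N x - g x\<bar> powr p)
          \<le> (LINT x:dom2 L|lebesgue. \<bar>clip N (w x) - G n x\<bar> powr p)"
    by (rule set_integral_mono[OF int G_int close])
  with approx have "(LINT x:dom2 L|lebesgue. \<bar>clip N (w x) * cutoff2 L N x - g x\<bar> powr p) < \<delta>"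
    by linarith
  moreover have "g x = 0" if "cutoff2 L N x = 0" for x using that by (simp add: g_def)
  ultimately show ?thesis using that[OF g _ int] by blast
qed

lemma Lp_dense_continuous_inner_support:
  fixes w :: "real \<times> real \<Rightarrow> real"
  assumes L: "L > 0" and p: "p > 0" and w: "w \<in> borel_measurable lebesgue"
    and wi: "set_integrable lebesgue (dom2 L) (\<lambda>x. \<bar>w x\<bar> powr p)" and \<epsilon>: "\<epsilon> > 0"
  obtains g d where "continuous_on UNIV g" "0 < d" "d < L"
    "\<And>x. \<not> (fst x \<in> {-L+d..L-d} \<and> snd x \<in> {-L+d..L-d}) \<Longrightarrow> g x = 0"
    "set_integrable lebesgue (dom2 L) (\<lambda>x. \<bar>w x - g x\<bar> powr p)"
    "(LINT x:dom2 L|lebesgue. \<bar>w x - g x\<bar> powr p) < \<epsilon>"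
proof -
  define \<delta> where "\<delta> = \<epsilon> / (2 * 2 powr p)"
  have \<delta>: "\<delta> > 0" using \<epsilon> by (simp add: \<delta>_def)
  obtain N1 :: nat where N1: "1 / L < real N1" using reals_Archimedean2 by blast
  have "\<forall>\<^sub>F n in sequentially.
      (LINT x:dom2 L|lebesgue. \<bar>w x - clip n (w x) * cutoff2 L n x\<bar> powr p) < \<delta> \<and> 1 / L < real n"
    using order_tendstoD(2)[OF Lp_truncation(2)[OF p w wi] \<delta>] N1
    by (intro eventually_conj) (auto intro!: eventually_sequentiallyI[of N1] elim: less_le_trans)
  then obtain N :: nat
    where trunc: "(LINT x:dom2 L|lebesgue. \<bar>w x - clip N (w x) * cutoff2 L N x\<bar> powr p) < \<delta>"
    and N_large: "1 / L < real N"
    using eventually_happens'[OF sequentially_bot] by blast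
  have "0 < 1 / L" using L by simp
  with N_large have "0 < real N" by linarith
  with N_large L have N: "0 < N" "1 / real N < L" by (auto simp: field_simps)
  obtain g where g: "continuous_on UNIV g" and supp: "\<And>x. cutoff2 L N x = 0 \<Longrightarrow> g x = 0"
    and g_int: "set_integrable lebesgue (dom2 L) (\<lambda>x. \<bar>clip N (w x) * cutoff2 L N x - g x\<bar> powr p)"
    and approx: "(LINT x:dom2 L|lebesgue. \<bar>clip N (w x) * cutoff2 L N x - g x\<bar> powr p) < \<delta>"
    using Lp_approx_cutoff_by_continuous[OF p w \<delta>] by blast
  note trunc_int = Lp_truncation(1)[OF p w wi, of N]
  have "set_integrable lebesgue (dom2 L) (\<lambda>x. \<bar>w x - g x\<bar> powr p)"
  proof (rule set_integrable_abs_diff_powr[OF p _ trunc_int g_int order_refl])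
    show "set_borel_measurable lebesgue (dom2 L) (\<lambda>x. \<bar>w x - g x\<bar> powr p)"
      using w continuous_imp_borel_measurable_lebesgue[OF g] dom2_lmeasurable
      unfolding set_borel_measurable_def by measurable
  qed
  moreover have "(LINT x:dom2 L|lebesgue. \<bar>w x - g x\<bar> powr p) < \<epsilon>"
  proof -
    have "(LINT x:dom2 L|lebesgue. \<bar>w x - g x\<bar> powr p)
        \<le> 2 powr p * ((LINT x:dom2 L|lebesgue. \<bar>w x - clip N (w x) * cutoff2 L N x\<bar> powr p)
           + (LINT x:dom2 L|lebesgue. \<bar>clip N (w x) * cutoff2 L N x - g x\<bar> powr p))"
      by (rule set_integral_abs_diff_powr_le[OF p trunc_int g_int order_refl])
    also have "\<dots> < 2 powr p * (\<delta> + \<delta>)"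
      using trunc approx by (intro mult_strict_left_mono) auto
    also have "\<dots> = \<epsilon>" by (simp add: \<delta>_def)
    finally show ?thesis .
  qed
  moreover have "g x = 0"
    if "\<not> (fst x \<in> {-L + 1 / real N..L - 1 / real N} \<and> snd x \<in> {-L + 1 / real N..L - 1 / real N})" for x
    using supp cutoff2_eq_zero[OF N(1) that] by simp
  ultimately show ?thesis using that[OF g _ N(2)] N(1) by simp
qed

lemma in_Lp_dense_continuous_inner_support:
  assumes L: "L > 0" and p: "p > 0" and v: "in_Lp p (dom2 L) v" and \<epsilon>: "\<epsilon> > 0"
  obtains g d where "continuous_on UNIV g" "0 < d" "d < L"
    "\<And>x. \<not> (fst x \<in> {-L+d..L-d} \<and> snd x \<in> {-L+d..L-d}) \<Longrightarrow> g x = 0"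
    "set_integrable lebesgue (dom2 L) (\<lambda>x. \<bar>v x - g x\<bar> powr p)"
    "(LINT x:dom2 L|lebesgue. \<bar>v x - g x\<bar> powr p) < \<epsilon>"
proof -
  define w where "w x = indicator (dom2 L) x * v x" for x
  have w_eq: "w x = v x" if "x \<in> dom2 L" for x using that by (simp add: w_def)
  have w: "w \<in> borel_measurable lebesgue"
    using v unfolding in_Lp_def set_borel_measurable_def w_def[abs_def] by simp
  have "set_integrable lebesgue (dom2 L) (\<lambda>x. \<bar>w x\<bar> powr p)"
    using v w_eq unfolding in_Lp_def by (subst set_integrable_cong[OF refl refl]) auto
  then obtain g d where g: "continuous_on UNIV g" "0 < d" "d < L"
    "\<And>x. \<not> (fst x \<in> {-L+d..L-d} \<and> snd x \<in> {-L+d..L-d}) \<Longrightarrow> g x = 0"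
    and int: "set_integrable lebesgue (dom2 L) (\<lambda>x. \<bar>w x - g x\<bar> powr p)"
    and small: "(LINT x:dom2 L|lebesgue. \<bar>w x - g x\<bar> powr p) < \<epsilon>"
    using Lp_dense_continuous_inner_support[OF L p w _ \<epsilon>] by blast
  have "set_integrable lebesgue (dom2 L) (\<lambda>x. \<bar>v x - g x\<bar> powr p)"
    using int w_eq by (subst set_integrable_cong[OF refl refl]) auto
  moreover have "(LINT x:dom2 L|lebesgue. \<bar>v x - g x\<bar> powr p) = (LINT x:dom2 L|lebesgue. \<bar>w x - g x\<bar> powr p)"
    using w_eq fmeasurableD[OF dom2_lmeasurable] by (intro set_lebesgue_integral_cong) auto
  ultimately show ?thesis using that[OF g] small by simp
qed

lemma eventually_Vh_Lp_close:
  assumes p: "p > 0" and g: "Vh_approximable L g"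
    and vg: "set_integrable lebesgue (dom2 L) (\<lambda>x. \<bar>v x - g x\<bar> powr p)" and e: "e > 0"
  shows "\<forall>\<^sub>F m in sequentially. \<exists>vh\<in>Vh L m.
           (LINT x:dom2 L|lebesgue. \<bar>v x - vh x\<bar> powr p)
             \<le> 2 powr p * (LINT x:dom2 L|lebesgue. \<bar>v x - g x\<bar> powr p) + e"
proof -
  have D: "dom2 L \<in> sets lebesgue" "emeasure lebesgue (dom2 L) < \<infinity>"
    using fmeasurableD[OF dom2_lmeasurable] fmeasurableD2[OF dom2_lmeasurable]
    by (auto simp: less_top[symmetric])
  define \<mu> where "\<mu> = measure lebesgue (dom2 L)"
  have \<mu>: "0 \<le> \<mu>" by (simp add: \<mu>_def)
  define \<eta> where "\<eta> = (e / (2 powr p * (\<mu> + 1))) powr (1 / p)"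
  have \<eta>: "\<eta> > 0" using e \<mu> by (simp add: \<eta>_def)
  have "2 powr p * (\<eta> powr p * \<mu>) \<le> 2 powr p * (\<eta> powr p * (\<mu> + 1))"
    by (intro mult_left_mono) auto
  also have "\<dots> = e"
    using e p \<mu> by (simp add: \<eta>_def powr_powr)
  finally have small: "2 powr p * (\<eta> powr p * \<mu>) \<le> e" .
  show ?thesis
    using Vh_approximableD[OF g \<eta>]
  proof (rule eventually_mono)
    fix m assume "\<exists>vh\<in>Vh L m. \<forall>x\<in>dom2 L. \<bar>g x - vh x\<bar> \<le> \<eta>"
    then obtain vh where vh: "vh \<in> Vh L m" and close: "\<And>x. x \<in> dom2 L \<Longrightarrow> \<bar>g x - vh x\<bar> \<le> \<eta>"
      by blast
    have "(LINT x:dom2 L|lebesgue. \<bar>v x - vh x\<bar> powr p)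
        \<le> 2 powr p * ((LINT x:dom2 L|lebesgue. \<bar>v x - g x\<bar> powr p) + \<eta> powr p * \<mu>)"
      unfolding \<mu>_def by (rule set_integral_abs_diff_powr_le_uniform[OF p D vg close])
    also have "\<dots> \<le> 2 powr p * (LINT x:dom2 L|lebesgue. \<bar>v x - g x\<bar> powr p) + e"
      using small by (simp add: distrib_left)
    finally show "\<exists>vh\<in>Vh L m. (LINT x:dom2 L|lebesgue. \<bar>v x - vh x\<bar> powr p)
        \<le> 2 powr p * (LINT x:dom2 L|lebesgue. \<bar>v x - g x\<bar> powr p) + e"
      using vh by blast
  qed
qed

theorem corollary5p4:
  fixes L p :: real and v :: "real \<times> real \<Rightarrow> real"
  assumes "L > 0" and "p \<ge> 1" and "in_Lp p (dom2 L) v"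
  shows "(\<lambda>m. INF vh \<in> Vh L m. Lp_norm p (dom2 L) (\<lambda>x. v x - vh x)) \<longlonglongrightarrow> 0"
proof (rule INF_Lp_norm_tendsto_zero)
  show p: "p > 0" using assms(2) by simp
  fix \<epsilon> :: real assume \<epsilon>: "\<epsilon> > 0"
  then obtain g d where g: "continuous_on UNIV g" and d: "0 < d" "d < L"
    and supp: "\<And>x. \<not> (fst x \<in> {-L+d..L-d} \<and> snd x \<in> {-L+d..L-d}) \<Longrightarrow> g x = 0"
    and vg: "set_integrable lebesgue (dom2 L) (\<lambda>x. \<bar>v x - g x\<bar> powr p)"
    and small: "(LINT x:dom2 L|lebesgue. \<bar>v x - g x\<bar> powr p) < \<epsilon> / (2 * 2 powr p)"
    using in_Lp_dense_continuous_inner_support[OF assms(1) p assms(3), of "\<epsilon> / (2 * 2 powr p)"] by auto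
  have "Vh_approximable L g" by (rule Vh_approximable_continuous[OF assms(1) d g supp])
  then have "\<forall>\<^sub>F m in sequentially. \<exists>vh\<in>Vh L m. (LINT x:dom2 L|lebesgue. \<bar>v x - vh x\<bar> powr p)
               \<le> 2 powr p * (LINT x:dom2 L|lebesgue. \<bar>v x - g x\<bar> powr p) + \<epsilon> / 2"
    using \<epsilon> by (intro eventually_Vh_Lp_close[OF p _ vg]) auto
  moreover have "2 powr p * (LINT x:dom2 L|lebesgue. \<bar>v x - g x\<bar> powr p) + \<epsilon> / 2 \<le> \<epsilon>"
    using small by (simp add: field_simps)
  ultimately show "\<forall>\<^sub>F m in sequentially. \<exists>vh\<in>Vh L m. (LINT x:dom2 L|lebesgue. \<bar>v x - vh x\<bar> powr p) \<le> \<epsilon>"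
    by (auto elim!: eventually_mono intro: order_trans)
qed

end
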